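(* Let $Z$ be an $n\times n$ positive semidefinite complex matrix with eigenvalues $r_1,\dots,r_n$, and let $U$ be an $n\times n$ unitary matrix such that $I-UZ$ is nonsingular. Then $$\prod_{k=1}^n\frac{|1-r_k|}{1+r_k}\le \frac{|\det(I-Z^2)|}{|\det(I-UZ)|^2},$$ with equality if and only if $1$ is an eigenvalue of $Z$, or the eigenvalues of $UZ$ (with multiplicities) are $-r_1,\dots,-r_n$. If both $Z$ and $I-Z$ are nonsingular and $U\neq -I$, this inequality is strict. Moreover, if $0\le r_k<1$ for all $k=1,\dots,n$, then $$\frac{\det(I-Z^2)}{|\det(I-UZ)|^2}\le \prod_{k=1}^n\frac{1+r_k}{1-r_k},$$ with equality if and only if the eigenvalues of $UZ$ (with multiplicities) are $r_1,\dots,r_n$. If in addition $Z$ is nonsingular and $U\neq I$, this inequality is strict.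
   Context: $I$ denotes the $n\times n$ identity matrix. *)

theory Defs
  imports "Jordan_Normal_Form.Char_Poly" "Jordan_Normal_Form.Conjugate"
begin

definition mat_adj :: "complex mat \<Rightarrow> complex mat" where
  "mat_adj A = mat (dim_col A) (dim_row A) (\<lambda>(i,j). cnj (A $$ (j,i)))"

definition unitary_mat :: "nat \<Rightarrow> complex mat \<Rightarrow> bool" where
  "unitary_mat n U \<longleftrightarrow> U \<in> carrier_mat n n \<and> mat_adj U * U = 1\<^sub>m n"

definition psd_mat :: "nat \<Rightarrow> complex mat \<Rightarrow> bool" where
  "psd_mat n Z \<longleftrightarrow> Z \<in> carrier_mat n n \<and> mat_adj Z = Z \<and>
     (\<forall>v \<in> carrier_vec n. Im (conjugate v \<bullet> (Z *\<^sub>v v)) = 0 \<and> Re (conjugate v \<bullet> (Z *\<^sub>v v)) \<ge> 0)"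

end

theory Submission
  imports Defs "Jordan_Normal_Form.Schur_Decomposition"
begin

text \<open>
  Conjugating by a unitary V with V^* Z V = D = diag(r) (so r_k \<ge> 0) and putting W = V^* U V
  turns det(I - UZ) into det(I - WD) and det(I - Z^2) into \<Prod>(1 - r_k^2), so both inequalities
  are bounds on |det(I - WD)| for a unitary W.

  Upper bound: the k-th column of I - WD has length at most 1 + r_k, so Hadamard's inequality gives
  |det(I - WD)| \<le> \<Prod>(1 + r_k); equality forces every column to be extremal, i.e. WD = -D.

  Lower bound (r_k < 1): the Cayley-type transform V_0 = (I - WD)^-1 (W - D) satisfies
  (I - WD)(I + V_0 D) = I - D^2 and preserves the form G = (I - D^2)^-1, i.e. V_0 G V_0^* = G.
  Hence G^(-1/2) V_0 G^(1/2) is unitary, and the upper bound for it yields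
  |det(I - WD)| \<ge> \<Prod>(1 - r_k), with equality only if WD = D.
\<close>

section \<open>Diagonal matrices and characteristic polynomials\<close>

abbreviation real_diag :: "nat \<Rightarrow> (nat \<Rightarrow> real) \<Rightarrow> complex mat" where
  "real_diag n d \<equiv> mat_diag n (\<lambda>k. complex_of_real (d k))"

lemma index_mat_diag [simp]:
  "i < n \<Longrightarrow> j < n \<Longrightarrow> mat_diag n f $$ (i, j) = (if i = j then f i else 0)"
  "dim_row (mat_diag n f) = n" "dim_col (mat_diag n f) = n"
  by (auto simp: mat_diag_def)

lemma index_mult_mat_diag:
  "A \<in> carrier_mat m n \<Longrightarrow> i < m \<Longrightarrow> j < n \<Longrightarrow> (A * mat_diag n f) $$ (i, j) = A $$ (i, j) * f j"
  by (simp add: mat_diag_mult_right)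

lemma index_mat_diag_mult:
  "A \<in> carrier_mat n m \<Longrightarrow> i < n \<Longrightarrow> j < m \<Longrightarrow> (mat_diag n f * A) $$ (i, j) = f i * A $$ (i, j)"
  by (simp add: mat_diag_mult_left)

lemma index_mat_diag_mult_mat_diag:
  assumes "X \<in> carrier_mat n n" and "i < n" and "j < n"
  shows "(mat_diag n a * X * mat_diag n b) $$ (i, j) = a i * X $$ (i, j) * b j"
proof -
  have "(mat_diag n a * X * mat_diag n b) $$ (i, j) = (mat_diag n a * X) $$ (i, j) * b j"
    by (rule index_mult_mat_diag) (use assms in auto)
  also have "(mat_diag n a * X) $$ (i, j) = a i * X $$ (i, j)" by (rule index_mat_diag_mult) fact+
  finally show ?thesis .
qed

lemma index_mult_mat_diag_mult:
  assumes "X \<in> carrier_mat m n" and "Y \<in> carrier_mat n p" and "i < m" and "j < p"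
  shows "(X * mat_diag n g * Y) $$ (i, j) = (\<Sum>k<n. X $$ (i, k) * g k * Y $$ (k, j))"
  using assms by (simp add: index_mult_mat scalar_prod_def atLeast0LessThan mat_diag_mult_right)

lemma upper_triangular_mat_diag: "upper_triangular (mat_diag n f)"
  by (auto simp: upper_triangular_def)

lemma diag_mat_mat_diag: "diag_mat (mat_diag n f) = map f [0..<n]"
  by (rule nth_equalityI) (auto simp: diag_mat_def)

lemma det_mat_diag: "det (mat_diag n f) = (\<Prod>k<n. f k)"
  by (simp add: det_upper_triangular[OF upper_triangular_mat_diag mat_diag_dim]
      diag_mat_mat_diag prod.list_conv_set_nth atLeast0LessThan)

lemma char_poly_mat_diag: "char_poly (mat_diag n f) = (\<Prod>k<n. [:- f k, 1:])"
  by (simp add: char_poly_upper_triangular[OF mat_diag_dim upper_triangular_mat_diag]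
      diag_mat_mat_diag prod.list_conv_set_nth atLeast0LessThan)

lemma uminus_mat_diag: "- mat_diag n f = mat_diag n (\<lambda>k. - f k :: 'a :: group_add)"
  by (rule eq_matI) auto

lemma one_minus_real_diag_square: "1\<^sub>m n - real_diag n d * real_diag n d = real_diag n (\<lambda>k. 1 - (d k)\<^sup>2)"
  by (rule eq_matI) (auto simp: power2_eq_square)

lemma index_one_minus_mult_real_diag:
  assumes "W \<in> carrier_mat n n" and "i < n" and "k < n"
  shows "(1\<^sub>m n - W * real_diag n d) $$ (i, k) = (if i = k then 1 else 0) - W $$ (i, k) * complex_of_real (d k)"
  using assms by (simp add: index_mult_mat_diag[of W n n] del: index_mult_mat(1))

lemma det_one_minus_char_poly:
  assumes A: "(A :: complex mat) \<in> carrier_mat n n"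
  shows "det (1\<^sub>m n - A) = poly (char_poly A) 1"
proof -
  have "- char_matrix A 1 = 1\<^sub>m n - A" unfolding char_matrix_def using A by (intro eq_matI, auto)
  thus ?thesis using char_poly_matrix[OF A, of 1] by simp
qed

lemma poly_linear_factors: "poly (\<Prod>k<n. [:- c k, 1:]) x = (\<Prod>k<n. x - (c k :: complex))"
  unfolding poly_prod by (intro prod.cong refl) (simp add: algebra_simps)

lemma det_one_minus_linear_char_poly:
  fixes A :: "complex mat"
  assumes "A \<in> carrier_mat n n" and "char_poly A = (\<Prod>k<n. [:- c k, 1:])"
  shows "det (1\<^sub>m n - A) = (\<Prod>k<n. 1 - c k)"
  using det_one_minus_char_poly[OF assms(1)] by (simp add: assms(2) poly_linear_factors)

lemma eigenvalue_one_iff_det: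
  "(A :: complex mat) \<in> carrier_mat n n \<Longrightarrow> eigenvalue A 1 \<longleftrightarrow> det (1\<^sub>m n - A) = 0"
  by (simp add: eigenvalue_root_char_poly det_one_minus_char_poly)

section \<open>Squared norms, conjugate transposes and unitary matrices\<close>

definition csq_norm :: "complex vec \<Rightarrow> real" where
  "csq_norm v = (\<Sum>i<dim_vec v. (cmod (v $ i))\<^sup>2)"

lemma csq_norm_nonneg: "0 \<le> csq_norm v"
  unfolding csq_norm_def by (auto intro: sum_nonneg)

lemma index_le_csq_norm: "i < dim_vec v \<Longrightarrow> (cmod (v $ i))\<^sup>2 \<le> csq_norm v"
  unfolding csq_norm_def by (rule member_le_sum) auto

lemma csq_norm_smult: "csq_norm (c \<cdot>\<^sub>v v) = (cmod c)\<^sup>2 * csq_norm v"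
  by (simp add: csq_norm_def norm_mult power_mult_distrib sum_distrib_left)

lemma csq_norm_uminus [simp]: "csq_norm (- v) = csq_norm v"
  unfolding csq_norm_def by (auto intro: sum.cong)

lemma csq_norm_col:
  "A \<in> carrier_mat m n \<Longrightarrow> k < n \<Longrightarrow> csq_norm (col A k) = (\<Sum>i<m. (cmod (A $$ (i, k)))\<^sup>2)"
  by (simp add: csq_norm_def)

lemma csq_norm_eq_0_iff: "v \<in> carrier_vec n \<Longrightarrow> csq_norm v = 0 \<longleftrightarrow> v = 0\<^sub>v n"
  using index_le_csq_norm[of _ v] by (auto simp: csq_norm_def intro!: eq_vecI)

lemma cscalar_prod_self: "x \<bullet>c x = complex_of_real (csq_norm x)"
  by (simp add: scalar_prod_def csq_norm_def atLeast0LessThan complex_norm_square del: of_real_power)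

lemma mat_adj_dims [simp]: "dim_row (mat_adj A) = dim_col A" "dim_col (mat_adj A) = dim_row A"
  by (auto simp: mat_adj_def)

lemma mat_adj_carrier [simp]: "A \<in> carrier_mat m n \<Longrightarrow> mat_adj A \<in> carrier_mat n m"
  by (auto simp: mat_adj_def)

lemma index_mat_adj [simp]:
  "i < dim_col A \<Longrightarrow> j < dim_row A \<Longrightarrow> mat_adj A $$ (i, j) = cnj (A $$ (j, i))"
  by (auto simp: mat_adj_def)

lemma mat_adj_mat_adj [simp]: "mat_adj (mat_adj A) = A"
  by (rule eq_matI) auto

lemma mat_adj_mult:
  "A \<in> carrier_mat m k \<Longrightarrow> B \<in> carrier_mat k n \<Longrightarrow> mat_adj (A * B) = mat_adj B * mat_adj A"
  by (rule eq_matI) (auto simp: index_mult_mat scalar_prod_def mult.commute)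

lemma mat_adj_one [simp]: "mat_adj (1\<^sub>m n) = 1\<^sub>m n"
  by (rule eq_matI) auto

lemma mat_adj_minus:
  "A \<in> carrier_mat m n \<Longrightarrow> B \<in> carrier_mat m n \<Longrightarrow> mat_adj (A - B) = mat_adj A - mat_adj B"
  by (rule eq_matI) auto

lemma mat_adj_mat_diag [simp]: "mat_adj (mat_diag n f) = mat_diag n (\<lambda>k. cnj (f k))"
  by (rule eq_matI) auto

lemma det_mat_adj:
  assumes A: "A \<in> carrier_mat n n"
  shows "det (mat_adj A) = cnj (det A)"
proof -
  interpret c: comm_ring_hom cnj by unfold_locales auto
  have "mat_adj A = map_mat cnj (transpose_mat A)" by (rule eq_matI) auto
  thus ?thesis using det_transpose[OF A] by simp
qed

lemma index_mat_adj_mult_self: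
  assumes Y: "Y \<in> carrier_mat m k" and j: "j < k"
  shows "(mat_adj Y * Y) $$ (j, j) = complex_of_real (csq_norm (col Y j))"
  using Y j by (simp add: index_mult_mat scalar_prod_def csq_norm_def atLeast0LessThan
      mult.commute[of "cnj _"] complex_norm_square del: of_real_power)

lemma unitary_mat_carrier: "unitary_mat n U \<Longrightarrow> U \<in> carrier_mat n n"
  by (simp add: unitary_mat_def)

lemma unitary_mat_right_inverse: "unitary_mat n U \<Longrightarrow> U * mat_adj U = 1\<^sub>m n"
  using mat_mult_left_right_inverse[of "mat_adj U" n U] unfolding unitary_mat_def by auto

lemma unitary_mat_adj: "unitary_mat n U \<Longrightarrow> unitary_mat n (mat_adj U)"
  using unitary_mat_right_inverse unfolding unitary_mat_def by (metis mat_adj_mat_adj mat_adj_carrier)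

lemma unitary_mat_mult:
  assumes U: "unitary_mat n U" and V: "unitary_mat n V"
  shows "unitary_mat n (U * V)"
proof -
  have c: "U \<in> carrier_mat n n" "V \<in> carrier_mat n n" using U V by (auto dest: unitary_mat_carrier)
  have "mat_adj (U * V) * (U * V) = mat_adj V * ((mat_adj U * U) * V)"
    using c by (simp add: mat_adj_mult assoc_mult_mat[of _ n n _ n _ n])
  thus ?thesis using U V c unfolding unitary_mat_def by simp
qed

lemma cmod_det_unitary:
  assumes U: "unitary_mat n U"
  shows "cmod (det U) = 1"
proof -
  have c: "U \<in> carrier_mat n n" using U by (rule unitary_mat_carrier)
  have "cnj (det U) * det U = 1"
    using U det_mult[of "mat_adj U" n U] det_mat_adj[OF c] c unfolding unitary_mat_def by simp
  hence "(cmod (det U))\<^sup>2 = 1" by (metis complex_norm_square mult.commute of_real_eq_1_iff)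
  thus ?thesis using norm_ge_zero[of "det U"] by (simp add: power2_eq_1_iff)
qed

lemma csq_norm_col_unitary:
  assumes U: "unitary_mat n U" and j: "j < n"
  shows "csq_norm (col U j) = 1"
  using index_mat_adj_mult_self[OF unitary_mat_carrier[OF U] j] U j unfolding unitary_mat_def
  by simp

lemma csq_norm_col_mat_adj_mult:
  assumes W: "unitary_mat n W" and A: "A \<in> carrier_mat n k" and j: "j < k"
  shows "csq_norm (col (mat_adj W * A) j) = csq_norm (col A j)"
proof -
  have Wc: "W \<in> carrier_mat n n" using W by (rule unitary_mat_carrier)
  have "mat_adj (mat_adj W * A) * (mat_adj W * A) = mat_adj A * W * (mat_adj W * A)"
    using Wc A by (simp add: mat_adj_mult[of "mat_adj W" n n A k])
  also have "\<dots> = mat_adj A * (W * (mat_adj W * A))"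
    using Wc A by (intro assoc_mult_mat[of _ k n _ n _ k]) auto
  also have "W * (mat_adj W * A) = (W * mat_adj W) * A"
    using Wc A by (intro assoc_mult_mat[symmetric, of _ n n _ n _ k]) auto
  also have "\<dots> = A" using unitary_mat_right_inverse[OF W] A by simp
  finally show ?thesis
    using index_mat_adj_mult_self[of _ n k j] Wc A j by (metis mult_carrier_mat mat_adj_carrier of_real_eq_iff)
qed

lemma similar_mat_unitary_conj:
  assumes W: "unitary_mat n W" and X: "X \<in> carrier_mat n n"
  shows "similar_mat (mat_adj W * X * W) X"
  using W X unitary_mat_right_inverse[OF W]
  unfolding similar_mat_def similar_mat_wit_def Let_def unitary_mat_def
  by (intro exI[of _ "mat_adj W"] exI[of _ W]) auto

lemma mat_adj_mult_conj:
  assumes W: "W \<in> carrier_mat n n" and P: "P \<in> carrier_mat n n" and X: "X \<in> carrier_mat n n"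
  shows "mat_adj (W * P) * X * (W * P) = mat_adj P * (mat_adj W * X * W) * P"
  using W P X by (simp add: mat_adj_mult[OF W P] assoc_mult_mat[of _ n n _ n _ n] mult_carrier_mat[of _ n n _ n])

lemma mat_adj_conj:
  assumes W: "W \<in> carrier_mat n n" and X: "X \<in> carrier_mat n n"
  shows "mat_adj (mat_adj W * X * W) = mat_adj W * mat_adj X * W"
  using W X by (simp add: mat_adj_mult[of _ n n _ n] assoc_mult_mat[of _ n n _ n _ n])

lemma unitary_conj_mult:
  assumes V: "unitary_mat n V" and X: "X \<in> carrier_mat n n" and Y: "Y \<in> carrier_mat n n"
  shows "mat_adj V * (X * Y) * V = (mat_adj V * X * V) * (mat_adj V * Y * V)"
proof -
  have Vc: "V \<in> carrier_mat n n" using V by (rule unitary_mat_carrier)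
  have "(mat_adj V * X * V) * (mat_adj V * Y * V) = mat_adj V * X * (V * mat_adj V) * Y * V"
    using Vc X Y by (simp add: assoc_mult_mat[of _ n n _ n _ n] mult_carrier_mat[of _ n n _ n])
  thus ?thesis
    using Vc X Y unitary_mat_right_inverse[OF V]
    by (simp add: assoc_mult_mat[of _ n n _ n _ n] mult_carrier_mat[of _ n n _ n])
qed

lemma unitary_conj_one_minus:
  assumes V: "unitary_mat n V" and X: "X \<in> carrier_mat n n"
  shows "mat_adj V * (1\<^sub>m n - X) * V = 1\<^sub>m n - mat_adj V * X * V"
proof -
  have Vc: "V \<in> carrier_mat n n" using V by (rule unitary_mat_carrier)
  have "mat_adj V * (1\<^sub>m n - X) = mat_adj V - mat_adj V * X"
    using mult_minus_distrib_mat[OF mat_adj_carrier[OF Vc] one_carrier_mat X] Vc by simp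
  hence "mat_adj V * (1\<^sub>m n - X) * V = mat_adj V * V - mat_adj V * X * V"
    using minus_mult_distrib_mat[OF mat_adj_carrier[OF Vc] mult_carrier_mat[OF mat_adj_carrier[OF Vc] X] Vc]
    by simp
  thus ?thesis using V unfolding unitary_mat_def by simp
qed

lemma unitary_conj_cancel:
  assumes W: "unitary_mat n W" and X: "X \<in> carrier_mat n n" and Y: "Y \<in> carrier_mat n n"
    and eq: "mat_adj W * X * W = mat_adj W * Y * W"
  shows "X = Y"
proof -
  have Wc: "W \<in> carrier_mat n n" using W by (rule unitary_mat_carrier)
  have conj_inverse: "W * (mat_adj W * M * W) * mat_adj W = M" if M: "M \<in> carrier_mat n n" for M
  proof -
    have "W * (mat_adj W * M * W) * mat_adj W = (W * mat_adj W) * M * (W * mat_adj W)"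
      using M Wc by (simp add: assoc_mult_mat[of _ n n _ n _ n] mult_carrier_mat[of _ n n _ n])
    thus ?thesis using M unitary_mat_right_inverse[OF W] by simp
  qed
  have "X = W * (mat_adj W * X * W) * mat_adj W" using conj_inverse[OF X] by simp
  also have "\<dots> = Y" unfolding eq by (rule conj_inverse[OF Y])
  finally show ?thesis .
qed

lemma unitary_completion:
  assumes n: "0 < n" and u: "u \<in> carrier_vec n" and un: "csq_norm u = 1"
  shows "\<exists>W. unitary_mat n W \<and> col W 0 = u"
proof -
  interpret cof_vec_space n "TYPE(complex)" .
  have u0: "u \<noteq> 0\<^sub>v n" using un by (auto simp: csq_norm_def)
  define b where "b = basis_completion u"
  from basis_completion[OF u u0, folded b_def]
  have dist_b: "distinct b" and indep: "\<not> lin_dep (set b)" and b: "set b \<subseteq> carrier_vec n"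
    and hdb: "hd b = u" and len_b: "length b = n" by auto
  from hdb len_b n obtain vs where bv: "b = u # vs" by (cases b) auto
  define ws where "ws = gram_schmidt n b"
  from gram_schmidt_result[OF b dist_b indep refl, folded ws_def]
  have ws: "set ws \<subseteq> carrier_vec n" "corthogonal ws" "length ws = n"
    by (auto simp: len_b)
  have ws0: "ws ! 0 = u"
    using gram_schmidt_hd[OF u, of vs] ws(3) n unfolding ws_def bv by (cases "gram_schmidt n (u # vs)") auto
  have wsc: "\<And>j. j < n \<Longrightarrow> ws ! j \<in> carrier_vec n" using ws by auto
  define nm where "nm j = sqrt (csq_norm (ws ! j))" for j
  have self: "ws ! j \<bullet>c ws ! j = complex_of_real (nm j * nm j)" for j
    using cscalar_prod_self[of "ws ! j"] csq_norm_nonneg[of "ws ! j"] unfolding nm_def by simp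
  have nm_pos: "0 < nm j" if "j < n" for j
    using ws(2) ws(3) that self[of j] csq_norm_nonneg[of "ws ! j"] unfolding corthogonal_def nm_def
    by (metis mult_eq_0_iff of_real_0 real_sqrt_gt_zero real_sqrt_eq_zero_cancel_iff
        less_eq_real_def)
  define W where "W = mat n n (\<lambda>(i, j). ws ! j $ i / complex_of_real (nm j))"
  have W: "W \<in> carrier_mat n n" unfolding W_def by auto
  have "mat_adj W * W = 1\<^sub>m n"
  proof (rule eq_matI)
    fix i j assume "i < dim_row (1\<^sub>m n)" and "j < dim_col (1\<^sub>m n)"
    hence i: "i < n" and j: "j < n" by auto
    have "(mat_adj W * W) $$ (i, j) = ws ! j \<bullet>c ws ! i / complex_of_real (nm i * nm j)"
      using i j W wsc[OF i] wsc[OF j]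
      by (simp add: index_mult_mat scalar_prod_def W_def sum_divide_distrib field_simps)
    also have "\<dots> = 1\<^sub>m n $$ (i, j)"
      using ws(2) ws(3) i j self[of j] nm_pos[OF j] unfolding corthogonal_def by auto
    finally show "(mat_adj W * W) $$ (i, j) = 1\<^sub>m n $$ (i, j)" .
  qed (use W in auto)
  moreover have "col W 0 = u"
    using u n nm_pos by (intro eq_vecI) (auto simp: W_def ws0 nm_def un)
  ultimately show ?thesis using W unfolding unitary_mat_def by blast
qed

lemma exists_unitary_first_col:
  assumes n: "0 < n" and v: "v \<in> carrier_vec n"
  shows "\<exists>W. unitary_mat n W \<and> v = complex_of_real (sqrt (csq_norm v)) \<cdot>\<^sub>v col W 0"
proof (cases "v = 0\<^sub>v n")
  case True
  have "unitary_mat n (1\<^sub>m n)" by (simp add: unitary_mat_def)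
  thus ?thesis using True v by (intro exI[of _ "1\<^sub>m n"]) (auto simp: csq_norm_def)
next
  case False
  define s where "s = sqrt (csq_norm v)"
  have s: "0 < s" using False csq_norm_eq_0_iff[OF v] csq_norm_nonneg[of v] by (simp add: s_def)
  define u where "u = complex_of_real (1 / s) \<cdot>\<^sub>v v"
  have "csq_norm u = (1 / s)\<^sup>2 * csq_norm v"
    unfolding u_def csq_norm_smult norm_of_real using s by simp
  also have "\<dots> = 1" using s csq_norm_nonneg[of v] by (simp add: s_def power_divide)
  finally have "csq_norm u = 1" .
  moreover have "u \<in> carrier_vec n" using v by (simp add: u_def)
  ultimately obtain W where W: "unitary_mat n W" and "col W 0 = u"
    using unitary_completion[OF n] by blast
  moreover have "v = complex_of_real s \<cdot>\<^sub>v u"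
    using s v by (intro eq_vecI) (auto simp: u_def)
  ultimately show ?thesis by (auto simp: s_def)
qed

lemma index_mat_adj_mult_first_col:
  assumes W: "unitary_mat n W" and A: "A \<in> carrier_mat n m" and m: "0 < m"
    and col0: "col A 0 = c \<cdot>\<^sub>v col W 0" and i: "i < n"
  shows "(mat_adj W * A) $$ (i, 0) = (if i = 0 then c else 0)"
proof -
  have Wc: "W \<in> carrier_mat n n" using W by (rule unitary_mat_carrier)
  have "(mat_adj W * A) $$ (i, 0) = row (mat_adj W) i \<bullet> col A 0"
    using i Wc A m by (simp add: index_mult_mat)
  also have "\<dots> = c * (row (mat_adj W) i \<bullet> col W 0)"
    unfolding col0 using i Wc by simp
  also have "row (mat_adj W) i \<bullet> col W 0 = (mat_adj W * W) $$ (i, 0)"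
    using i Wc by (simp add: index_mult_mat)
  finally show ?thesis using W i unfolding unitary_mat_def by simp
qed

section \<open>Hadamard's inequality\<close>

lemma det_first_col_unit:
  assumes B: "B \<in> carrier_mat (Suc m) (Suc m)"
    and col0: "\<And>i. i < Suc m \<Longrightarrow> B $$ (i, 0) = (if i = 0 then c else 0)"
  shows "det B = c * det (mat_delete B 0 0)"
proof -
  have "det B = (\<Sum>i<Suc m. B $$ (i, 0) * cofactor B i 0)"
    by (rule laplace_expansion_column[OF B]) simp
  also have "\<dots> = (\<Sum>i<Suc m. if i = 0 then c * cofactor B 0 0 else 0)"
    by (rule sum.cong) (auto simp: col0)
  finally show ?thesis by (simp add: cofactor_def)
qed

lemma csq_norm_col_mat_delete_le:
  assumes B: "B \<in> carrier_mat (Suc m) (Suc m)" and k: "k < m"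
  shows "csq_norm (col (mat_delete B 0 0) k) \<le> csq_norm (col B (Suc k))"
proof -
  have "csq_norm (col B (Suc k)) = (cmod (B $$ (0, Suc k)))\<^sup>2 + (\<Sum>i<m. (cmod (B $$ (Suc i, Suc k)))\<^sup>2)"
    using B k by (simp add: csq_norm_def sum.lessThan_Suc_shift del: sum.lessThan_Suc)
  moreover have "csq_norm (col (mat_delete B 0 0) k) = (\<Sum>i<m. (cmod (B $$ (Suc i, Suc k)))\<^sup>2)"
    using B k by (simp add: csq_norm_def mat_delete_def)
  ultimately show ?thesis by simp
qed

theorem hadamard_inequality:
  assumes "A \<in> carrier_mat n n"
  shows "(cmod (det A))\<^sup>2 \<le> (\<Prod>k<n. csq_norm (col A k))"
  using assms
proof (induction n arbitrary: A)
  case 0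
  hence "A = 1\<^sub>m 0" by (intro eq_matI) auto
  thus ?case by simp
next
  case (Suc m A)
  define s where "s = sqrt (csq_norm (col A 0))"
  have "col A 0 \<in> carrier_vec (Suc m)" using Suc.prems by (metis carrier_matD(1) col_dim carrier_vecI)
  then obtain W where W: "unitary_mat (Suc m) W" and a0: "col A 0 = complex_of_real s \<cdot>\<^sub>v col W 0"
    using exists_unitary_first_col[of "Suc m" "col A 0"] unfolding s_def by auto
  have Wc: "W \<in> carrier_mat (Suc m) (Suc m)" using W by (rule unitary_mat_carrier)
  define B where "B = mat_adj W * A"
  have B: "B \<in> carrier_mat (Suc m) (Suc m)" using Wc Suc.prems by (auto simp: B_def)
  have "cmod (det A) = cmod (det B)"
    using det_mult[of "mat_adj W" "Suc m" A] Wc Suc.prems det_mat_adj[OF Wc] cmod_det_unitary[OF W]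
    by (simp add: B_def norm_mult)
  also have "det B = complex_of_real s * det (mat_delete B 0 0)"
    using det_first_col_unit[OF B] index_mat_adj_mult_first_col[OF W Suc.prems _ a0]
    by (simp add: B_def)
  finally have "(cmod (det A))\<^sup>2 = s\<^sup>2 * (cmod (det (mat_delete B 0 0)))\<^sup>2"
    by (simp add: norm_mult power_mult_distrib)
  also have "\<dots> \<le> s\<^sup>2 * (\<Prod>k<m. csq_norm (col (mat_delete B 0 0) k))"
    using Suc.IH[of "mat_delete B 0 0"] mat_delete_carrier[OF B] by (intro mult_left_mono) auto
  also have "\<dots> \<le> s\<^sup>2 * (\<Prod>k<m. csq_norm (col A (Suc k)))"
    using csq_norm_col_mat_delete_le[OF B] csq_norm_col_mat_adj_mult[OF W Suc.prems]
    by (intro mult_left_mono prod_mono) (auto simp: csq_norm_nonneg B_def)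
  also have "\<dots> = (\<Prod>k<Suc m. csq_norm (col A k))"
    by (simp add: s_def csq_norm_nonneg prod.lessThan_Suc_shift del: prod.lessThan_Suc)
  finally show ?case .
qed

section \<open>Unitary diagonalisation of Hermitian matrices\<close>

definition block_diag1 :: "'a \<Rightarrow> 'a :: zero mat \<Rightarrow> 'a mat" where
  "block_diag1 c M = mat (Suc (dim_row M)) (Suc (dim_col M))
     (\<lambda>(i, j). if i = 0 \<and> j = 0 then c else if i = 0 \<or> j = 0 then 0 else M $$ (i - 1, j - 1))"

lemma block_diag1_carrier [simp]: "M \<in> carrier_mat m n \<Longrightarrow> block_diag1 c M \<in> carrier_mat (Suc m) (Suc n)"
  by (auto simp: block_diag1_def)

lemma index_block_diag1 [simp]:
  "dim_row (block_diag1 c M) = Suc (dim_row M)" "dim_col (block_diag1 c M) = Suc (dim_col M)"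
  "i < Suc (dim_row M) \<Longrightarrow> j < Suc (dim_col M) \<Longrightarrow> block_diag1 c M $$ (i, j) =
     (if i = 0 \<and> j = 0 then c else if i = 0 \<or> j = 0 then 0 else M $$ (i - 1, j - 1))"
  by (auto simp: block_diag1_def)

lemma block_diag1_mult:
  fixes M :: "'a :: semiring_0 mat"
  assumes M: "M \<in> carrier_mat m k" and N: "N \<in> carrier_mat k n"
  shows "block_diag1 a M * block_diag1 b N = block_diag1 (a * b) (M * N)"
proof (rule eq_matI)
  fix i j assume "i < dim_row (block_diag1 (a * b) (M * N))" "j < dim_col (block_diag1 (a * b) (M * N))"
  hence i: "i < Suc m" and j: "j < Suc n" using M N by auto
  have "(block_diag1 a M * block_diag1 b N) $$ (i, j) =
    block_diag1 a M $$ (i, 0) * block_diag1 b N $$ (0, j) +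
    (\<Sum>l<k. block_diag1 a M $$ (i, Suc l) * block_diag1 b N $$ (Suc l, j))"
    using i j M N
    by (simp add: index_mult_mat scalar_prod_def atLeast0LessThan sum.lessThan_Suc_shift del: sum.lessThan_Suc)
  also have "\<dots> = block_diag1 (a * b) (M * N) $$ (i, j)"
    using i j M N by (cases i; cases j) (auto simp: index_mult_mat scalar_prod_def atLeast0LessThan)
  finally show "(block_diag1 a M * block_diag1 b N) $$ (i, j) = block_diag1 (a * b) (M * N) $$ (i, j)" .
qed (use M N in auto)

lemma mat_adj_block_diag1: "mat_adj (block_diag1 c M) = block_diag1 (cnj c) (mat_adj M)"
  by (rule eq_matI) auto

lemma mat_diag_Suc: "mat_diag (Suc m) f = block_diag1 (f 0) (mat_diag m (\<lambda>i. f (Suc i)))"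
  by (rule eq_matI) auto

lemma unitary_block_diag1:
  assumes V: "unitary_mat m V"
  shows "unitary_mat (Suc m) (block_diag1 1 V)"
proof -
  have Vc: "V \<in> carrier_mat m m" using V by (rule unitary_mat_carrier)
  have "mat_adj (block_diag1 1 V) * block_diag1 1 V = block_diag1 1 (mat_adj V * V)"
    using Vc by (simp add: mat_adj_block_diag1 block_diag1_mult[of _ m m _ m])
  also have "\<dots> = 1\<^sub>m (Suc m)" using V unfolding unitary_mat_def by (intro eq_matI) auto
  finally show ?thesis using Vc unfolding unitary_mat_def by simp
qed

lemma char_poly_block_diag1:
  assumes M: "M \<in> carrier_mat m m"
  shows "char_poly (block_diag1 c M) = [:- c, 1:] * char_poly M"
proof -
  have "block_diag1 c M = four_block_mat (mat 1 1 (\<lambda>_. c)) (0\<^sub>m 1 m) (0\<^sub>m m 1) M"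
    by (rule eq_matI) (use M in auto)
  also have "char_poly \<dots> = char_poly (mat 1 1 (\<lambda>_. c)) * char_poly M"
    by (rule char_poly_four_block_zeros_col) (use M in auto)
  also have "char_poly (mat 1 1 (\<lambda>_. c)) = [:- c, 1:]"
    by (simp add: char_poly_defs det_def sign_def)
  finally show ?thesis .
qed

lemma exists_unitary_first_col_eigenvector:
  assumes A: "A \<in> carrier_mat n n" and ev: "eigenvalue A c"
  obtains W where "unitary_mat n W" and "A *\<^sub>v col W 0 = c \<cdot>\<^sub>v col W 0"
proof -
  obtain v where v: "v \<in> carrier_vec n" "v \<noteq> 0\<^sub>v n" and Av: "A *\<^sub>v v = c \<cdot>\<^sub>v v"
    using A ev unfolding eigenvalue_def eigenvector_def by auto
  define s where "s = sqrt (csq_norm v)"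
  have s: "s \<noteq> 0" using v csq_norm_eq_0_iff[OF v(1)] csq_norm_nonneg[of v] by (simp add: s_def)
  have "0 < n" using v by (cases n) auto
  then obtain W where W: "unitary_mat n W" and vW: "v = complex_of_real s \<cdot>\<^sub>v col W 0"
    using exists_unitary_first_col[OF _ v(1)] unfolding s_def by auto
  have "col W 0 = complex_of_real (1 / s) \<cdot>\<^sub>v v"
    using vW s unitary_mat_carrier[OF W] by (intro eq_vecI) auto
  hence "A *\<^sub>v col W 0 = c \<cdot>\<^sub>v col W 0" using Av v A by (intro eq_vecI) (auto simp: mult_mat_vec)
  thus thesis using that W by blast
qed

lemma unitary_deflation:
  assumes A: "A \<in> carrier_mat (Suc m) (Suc m)" and herm: "mat_adj A = A"
    and W: "unitary_mat (Suc m) W" and ev: "A *\<^sub>v col W 0 = c \<cdot>\<^sub>v col W 0"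
  defines "B \<equiv> mat_adj W * A * W"
  shows "B = block_diag1 c (mat_delete B 0 0)" and "mat_adj (mat_delete B 0 0) = mat_delete B 0 0"
proof -
  have Wc: "W \<in> carrier_mat (Suc m) (Suc m)" using W by (rule unitary_mat_carrier)
  have Bc: "B \<in> carrier_mat (Suc m) (Suc m)" using A Wc by (auto simp: B_def)
  have "B = mat_adj W * (A * W)" using A Wc by (simp add: B_def assoc_mult_mat[of _ "Suc m" "Suc m"])
  moreover have "col (A * W) 0 = c \<cdot>\<^sub>v col W 0"
    using col_mult2[OF A Wc, of 0] ev by simp
  ultimately have col0: "B $$ (i, 0) = (if i = 0 then c else 0)" if "i < Suc m" for i
    using index_mat_adj_mult_first_col[OF W _ _ _ that, of "A * W" "Suc m" c] A Wc by simp
  have hB: "mat_adj B = B" using mat_adj_conj[OF Wc A] herm by (simp add: B_def)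
  have row0: "B $$ (0, j) = 0" if "0 < j" "j < Suc m" for j
  proof -
    have "B $$ (0, j) = cnj (B $$ (j, 0))" using hB Bc that index_mat_adj[of 0 B j] by simp
    thus ?thesis using col0 that by simp
  qed
  show "B = block_diag1 c (mat_delete B 0 0)"
    by (rule eq_matI) (use Bc col0 row0 in \<open>auto simp: mat_delete_def\<close>)
  show "mat_adj (mat_delete B 0 0) = mat_delete B 0 0"
  proof (rule eq_matI)
    fix i j assume "i < dim_row (mat_delete B 0 0)" "j < dim_col (mat_delete B 0 0)"
    hence "i < m" "j < m" using Bc by (auto simp: mat_delete_def)
    thus "mat_adj (mat_delete B 0 0) $$ (i, j) = mat_delete B 0 0 $$ (i, j)"
      using Bc index_mat_adj[of "Suc i" B "Suc j"] by (simp add: hB mat_delete_def)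
  qed (use Bc in \<open>auto simp: mat_delete_def\<close>)
qed

theorem hermitian_unitary_diagonalisation:
  assumes "A \<in> carrier_mat n n" and "mat_adj A = A" and "char_poly A = (\<Prod>k<n. [:- c k, 1:])"
  shows "\<exists>V. unitary_mat n V \<and> mat_adj V * A * V = mat_diag n c"
  using assms
proof (induction n arbitrary: A c)
  case 0
  have "unitary_mat 0 (1\<^sub>m 0)" by (simp add: unitary_mat_def)
  moreover have "mat_adj (1\<^sub>m 0) * A * 1\<^sub>m 0 = mat_diag 0 c" using 0 by (intro eq_matI) auto
  ultimately show ?case by blast
next
  case (Suc m A c)
  note A = Suc.prems(1)
  have "poly (char_poly A) (c 0) = 0" unfolding Suc.prems(3) poly_prod by (rule prod_zero) auto
  hence "eigenvalue A (c 0)" using eigenvalue_root_char_poly[OF A] by simp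
  then obtain W where W: "unitary_mat (Suc m) W" and ev: "A *\<^sub>v col W 0 = c 0 \<cdot>\<^sub>v col W 0"
    using exists_unitary_first_col_eigenvector[OF A] by blast
  have Wc: "W \<in> carrier_mat (Suc m) (Suc m)" using W by (rule unitary_mat_carrier)
  define B where "B = mat_adj W * A * W"
  define C where "C = mat_delete B 0 0"
  have BC: "B = block_diag1 (c 0) C" and hC: "mat_adj C = C"
    using unitary_deflation[OF A Suc.prems(2) W ev] unfolding B_def C_def by auto
  have Cc: "C \<in> carrier_mat m m" using A Wc mat_delete_carrier[of B "Suc m" "Suc m"] by (auto simp: C_def B_def)
  have "[:- c 0, 1:] * char_poly C = char_poly B" using char_poly_block_diag1[OF Cc] BC by simp
  also have "\<dots> = char_poly A" unfolding B_def by (rule char_poly_similar[OF similar_mat_unitary_conj[OF W A]])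
  also have "\<dots> = [:- c 0, 1:] * (\<Prod>k<m. [:- c (Suc k), 1:])"
    unfolding Suc.prems(3) by (rule prod.lessThan_Suc_shift)
  finally have "char_poly C = (\<Prod>k<m. [:- c (Suc k), 1:])"
    by (metis mult_cancel_left pCons_eq_0_iff zero_neq_one)
  then obtain V3 where V3: "unitary_mat m V3" and CV3: "mat_adj V3 * C * V3 = mat_diag m (\<lambda>k. c (Suc k))"
    using Suc.IH[OF Cc hC, of "\<lambda>k. c (Suc k)"] by blast
  define P where "P = block_diag1 1 V3"
  have P: "unitary_mat (Suc m) P" unfolding P_def by (rule unitary_block_diag1[OF V3])
  have V3c: "V3 \<in> carrier_mat m m" using V3 by (rule unitary_mat_carrier)
  have "mat_adj (W * P) * A * (W * P) = mat_adj P * B * P"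
    unfolding B_def by (rule mat_adj_mult_conj[OF Wc unitary_mat_carrier[OF P] A])
  also have "\<dots> = block_diag1 (c 0) (mat_adj V3 * C * V3)"
    using V3c Cc by (simp add: BC P_def mat_adj_block_diag1 block_diag1_mult[of _ m m _ m]
        mult_carrier_mat[of _ m m _ m])
  also have "\<dots> = mat_diag (Suc m) c" by (simp add: CV3 mat_diag_Suc)
  finally show ?case using unitary_mat_mult[OF W P] by blast
qed

lemma psd_unitary_diagonalisation:
  assumes psd: "psd_mat n Z" and eig: "char_poly Z = (\<Prod>k<n. [:- complex_of_real (r k), 1:])"
  obtains V where "unitary_mat n V" and "mat_adj V * Z * V = real_diag n r" and "\<And>k. k < n \<Longrightarrow> 0 \<le> r k"
proof -
  have Z: "Z \<in> carrier_mat n n" and pos: "\<And>v. v \<in> carrier_vec n \<Longrightarrow> 0 \<le> Re (conjugate v \<bullet> (Z *\<^sub>v v))"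
    using psd unfolding psd_mat_def by auto
  obtain V where V: "unitary_mat n V" and D: "mat_adj V * Z * V = real_diag n r"
    using hermitian_unitary_diagonalisation[OF Z _ eig] psd unfolding psd_mat_def by blast
  have Vc: "V \<in> carrier_mat n n" using V by (rule unitary_mat_carrier)
  have "0 \<le> r k" if k: "k < n" for k
  proof -
    have "complex_of_real (r k) = (mat_adj V * Z * V) $$ (k, k)" using D k by simp
    also have "mat_adj V * Z * V = mat_adj V * (Z * V)" using Vc Z by (simp add: assoc_mult_mat[of _ n n _ n _ n])
    also have "(mat_adj V * (Z * V)) $$ (k, k) = row (mat_adj V) k \<bullet> col (Z * V) k"
      by (rule index_mult_mat(1)) (use Vc Z k in auto)
    also have "row (mat_adj V) k = conjugate (col V k)" using Vc k by (intro eq_vecI) auto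
    also have "col (Z * V) k = Z *\<^sub>v col V k" using col_mult2[OF Z Vc k] .
    finally show ?thesis using pos[of "col V k"] Vc k by (metis Re_complex_of_real col_dim carrier_matD(1) carrier_vecI)
  qed
  thus thesis using that V D by blast
qed

lemma psd_eigenvalues_nonneg:
  assumes "psd_mat n Z" and "char_poly Z = (\<Prod>k<n. [:- complex_of_real (r k), 1:])" and "k < n"
  shows "0 \<le> r k"
  using psd_unitary_diagonalisation[OF assms(1,2)] assms(3) by metis

section \<open>The upper bound\<close>

lemma csq_norm_col_one_minus_mult_real_diag:
  assumes W: "W \<in> carrier_mat n n" and k: "k < n"
  shows "csq_norm (col (1\<^sub>m n - W * real_diag n d) k)
     = 1 - 2 * d k * Re (W $$ (k, k)) + (d k)\<^sup>2 * csq_norm (col W k)"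
proof -
  have entry: "(cmod ((if i = k then 1 else 0) - W $$ (i, k) * complex_of_real (d k)))\<^sup>2
     = (if i = k then 1 - 2 * d k * Re (W $$ (k, k)) else 0) + (d k)\<^sup>2 * (cmod (W $$ (i, k)))\<^sup>2" for i
  proof (cases "i = k")
    case True
    thus ?thesis by (simp only: cmod_power2) (simp add: power2_eq_square algebra_simps)
  next
    case False
    thus ?thesis by (simp add: norm_mult power_mult_distrib mult.commute)
  qed
  have "csq_norm (col (1\<^sub>m n - W * real_diag n d) k) = (\<Sum>i<n. (cmod ((1\<^sub>m n - W * real_diag n d) $$ (i, k)))\<^sup>2)"
    using W k by (intro csq_norm_col) auto
  also have "\<dots> = (\<Sum>i<n. (if i = k then 1 - 2 * d k * Re (W $$ (k, k)) else 0) + (d k)\<^sup>2 * (cmod (W $$ (i, k)))\<^sup>2)"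
    using W k by (intro sum.cong) (simp_all add: index_one_minus_mult_real_diag entry del: index_minus_mat)
  also have "\<dots> = 1 - 2 * d k * Re (W $$ (k, k)) + (d k)\<^sup>2 * csq_norm (col W k)"
    using W k by (simp add: sum.distrib sum_distrib_left csq_norm_col)
  finally show ?thesis .
qed

lemma csq_norm_col_one_minus_mult_real_diag_le:
  assumes W: "W \<in> carrier_mat n n" and k: "k < n"
    and col: "csq_norm (col W k) \<le> 1" and d: "0 \<le> d k"
  shows "csq_norm (col (1\<^sub>m n - W * real_diag n d) k) \<le> (1 + d k)\<^sup>2"
proof -
  have "(cmod (W $$ (k, k)))\<^sup>2 \<le> 1" using index_le_csq_norm[of k "col W k"] col W k by simp
  hence "- Re (W $$ (k, k)) \<le> 1" using abs_Re_le_cmod[of "W $$ (k, k)"] by (simp add: power_le_one_iff)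
  hence "d k * (- Re (W $$ (k, k))) \<le> d k" using d by (rule mult_left_le)
  moreover have "(d k)\<^sup>2 * csq_norm (col W k) \<le> (d k)\<^sup>2" using col by (simp add: mult_left_le)
  ultimately show ?thesis
    unfolding csq_norm_col_one_minus_mult_real_diag[OF W k] by (simp add: power2_eq_square algebra_simps)
qed

lemma csq_norm_col_one_minus_mult_real_diag_eq:
  assumes W: "W \<in> carrier_mat n n" and k: "k < n" and i: "i < n"
    and col: "csq_norm (col W k) \<le> 1" and d: "0 < d k"
    and eq: "csq_norm (col (1\<^sub>m n - W * real_diag n d) k) = (1 + d k)\<^sup>2"
  shows "W $$ (i, k) = (if i = k then -1 else 0)"
proof -
  let ?w = "W $$ (k, k)"
  have "d k * Re ?w \<le> d k * (-1)"
    using eq col d mult_left_le[of "csq_norm (col W k)" "(d k)\<^sup>2"]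
    unfolding csq_norm_col_one_minus_mult_real_diag[OF W k] by (simp add: power2_eq_square algebra_simps)
  hence re: "Re ?w \<le> -1" using d mult_le_cancel_left_pos by blast
  have wk: "(cmod ?w)\<^sup>2 \<le> csq_norm (col W k)" using index_le_csq_norm[of k "col W k"] W k by simp
  hence sq: "(Re ?w)\<^sup>2 + (Im ?w)\<^sup>2 \<le> 1" using col by (simp add: cmod_power2)
  have "cmod ?w \<le> 1" by (rule power2_le_imp_le) (use wk col in auto)
  hence "Re ?w = -1" using abs_Re_le_cmod[of ?w] re by linarith
  moreover from this have "Im ?w = 0" using sq by (simp add: power2_less_eq_zero_iff)
  ultimately have wkk: "?w = -1" by (simp add: complex_eq_iff)
  show ?thesis
  proof (cases "i = k")
    case False
    have "(\<Sum>j\<in>{i, k}. (cmod (W $$ (j, k)))\<^sup>2) \<le> (\<Sum>j<n. (cmod (W $$ (j, k)))\<^sup>2)"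
      using i k by (intro sum_mono2) auto
    also have "\<dots> \<le> 1" using col csq_norm_col[OF W k] by simp
    finally have "(cmod (W $$ (i, k)))\<^sup>2 \<le> 0" using False wkk by simp
    thus ?thesis using False by simp
  qed (simp add: wkk)
qed

lemma prod_eq_imp_factors_eq:
  fixes f g :: "'a \<Rightarrow> real"
  assumes "finite A" and "\<And>i. i \<in> A \<Longrightarrow> 0 \<le> f i \<and> f i \<le> g i" and "\<And>i. i \<in> A \<Longrightarrow> 0 < g i"
    and "(\<Prod>i\<in>A. g i) \<le> (\<Prod>i\<in>A. f i)" and "i \<in> A"
  shows "f i = g i"
proof (rule ccontr)
  assume "f i \<noteq> g i"
  hence "f i < g i" using assms(2)[OF assms(5)] by simp
  hence "(\<Prod>i\<in>A. f i) < (\<Prod>i\<in>A. g i)" by (rule prod_mono_strict[OF assms(5) _ assms(1-3)])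
  thus False using assms(4) by simp
qed

theorem cmod_det_one_minus_mult_real_diag_le:
  assumes W: "W \<in> carrier_mat n n" and cols: "\<And>k. k < n \<Longrightarrow> csq_norm (col W k) \<le> 1"
    and d: "\<And>k. k < n \<Longrightarrow> 0 \<le> d k"
  shows "cmod (det (1\<^sub>m n - W * real_diag n d)) \<le> (\<Prod>k<n. 1 + d k)"
proof -
  let ?A = "1\<^sub>m n - W * real_diag n d"
  have "(cmod (det ?A))\<^sup>2 \<le> (\<Prod>k<n. csq_norm (col ?A k))"
    using W by (intro hadamard_inequality) auto
  also have "\<dots> \<le> (\<Prod>k<n. (1 + d k)\<^sup>2)"
  proof (rule prod_mono)
    fix k assume "k \<in> {..<n}"
    hence k: "k < n" by simp
    show "0 \<le> csq_norm (col ?A k) \<and> csq_norm (col ?A k) \<le> (1 + d k)\<^sup>2"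
      using csq_norm_col_one_minus_mult_real_diag_le[of W n k d] W k cols[OF k] d[OF k] csq_norm_nonneg
      by blast
  qed
  also have "\<dots> = (\<Prod>k<n. 1 + d k)\<^sup>2" by (rule prod_power_distrib[symmetric])
  finally show ?thesis
    by (rule power2_le_imp_le) (use d in \<open>auto intro: prod_nonneg add_nonneg_nonneg\<close>)
qed

theorem cmod_det_one_minus_mult_real_diag_eq:
  assumes W: "W \<in> carrier_mat n n" and cols: "\<And>k. k < n \<Longrightarrow> csq_norm (col W k) \<le> 1"
    and d: "\<And>k. k < n \<Longrightarrow> 0 \<le> d k"
    and eq: "cmod (det (1\<^sub>m n - W * real_diag n d)) = (\<Prod>k<n. 1 + d k)"
  shows "W * real_diag n d = - real_diag n d"
proof -
  let ?A = "1\<^sub>m n - W * real_diag n d"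
  have le: "csq_norm (col ?A k) \<le> (1 + d k)\<^sup>2" if "k < n" for k
    using csq_norm_col_one_minus_mult_real_diag_le[of W n k d] W that cols[OF that] d[OF that] by blast
  have pos: "0 < (1 + d k)\<^sup>2" if "k < n" for k
    using d[OF that] by (intro zero_less_power) linarith
  have "(\<Prod>k<n. (1 + d k)\<^sup>2) = (cmod (det ?A))\<^sup>2" by (simp add: eq prod_power_distrib)
  also have "\<dots> \<le> (\<Prod>k<n. csq_norm (col ?A k))"
    using W by (intro hadamard_inequality) auto
  finally have colk: "csq_norm (col ?A k) = (1 + d k)\<^sup>2" if "k < n" for k
    using le pos csq_norm_nonneg that
    by (intro prod_eq_imp_factors_eq[of "{..<n}" "\<lambda>k. csq_norm (col ?A k)" "\<lambda>k. (1 + d k)\<^sup>2"]) auto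
  show ?thesis
  proof (rule eq_matI)
    fix i k assume "i < dim_row (- real_diag n d)" "k < dim_col (- real_diag n d)"
    hence i: "i < n" and k: "k < n" by auto
    have "(W * real_diag n d) $$ (i, k) = W $$ (i, k) * complex_of_real (d k)"
      using W i k by (rule index_mult_mat_diag)
    also have "\<dots> = (- real_diag n d) $$ (i, k)"
    proof (cases "d k = 0")
      case False
      thus ?thesis using csq_norm_col_one_minus_mult_real_diag_eq[OF W k i cols[OF k] _ colk[OF k]] d[OF k] i k
        by simp
    qed (use i k in simp)
    finally show "(W * real_diag n d) $$ (i, k) = (- real_diag n d) $$ (i, k)" .
  qed (use W in auto)
qed

lemma cmod_det_one_plus_mult_real_diag:
  assumes V: "unitary_mat n V" and d: "\<And>k. k < n \<Longrightarrow> 0 \<le> d k"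
  shows "cmod (det (1\<^sub>m n + V * real_diag n d)) \<le> (\<Prod>k<n. 1 + d k)"
    and "cmod (det (1\<^sub>m n + V * real_diag n d)) = (\<Prod>k<n. 1 + d k) \<Longrightarrow> V * real_diag n d = real_diag n d"
proof -
  have Vc: "V \<in> carrier_mat n n" using V by (rule unitary_mat_carrier)
  have mV: "- V \<in> carrier_mat n n" using Vc by simp
  have cols: "csq_norm (col (- V) k) \<le> 1" if "k < n" for k
    using csq_norm_col_unitary[OF V that] Vc that by simp
  have neg: "(- V) * real_diag n d = - (V * real_diag n d)"
    using Vc by (intro uminus_mult_left_mat) simp
  have eq: "1\<^sub>m n + V * real_diag n d = 1\<^sub>m n - (- V) * real_diag n d"
    unfolding neg using Vc by (intro eq_matI) auto
  show "cmod (det (1\<^sub>m n + V * real_diag n d)) \<le> (\<Prod>k<n. 1 + d k)"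
    unfolding eq by (rule cmod_det_one_minus_mult_real_diag_le[OF mV cols d])
  assume "cmod (det (1\<^sub>m n + V * real_diag n d)) = (\<Prod>k<n. 1 + d k)"
  hence "cmod (det (1\<^sub>m n - (- V) * real_diag n d)) = (\<Prod>k<n. 1 + d k)" by (simp only: eq)
  with mV cols d have "(- V) * real_diag n d = - real_diag n d"
    by (rule cmod_det_one_minus_mult_real_diag_eq)
  thus "V * real_diag n d = real_diag n d" unfolding neg by simp
qed

section \<open>The lower bound\<close>

lemma hermitian_form_term:
  fixes w c a b d g :: "'a :: comm_ring_1"
  shows "(w - a * d) * g * (c - b * d) = (a - w * d) * g * (b - d * c) + (w * c - a * b) * (g * (1 - d * d))"
  by (simp add: algebra_simps)

lemma hermitian_form_identity:
  assumes W: "unitary_mat n W" and g: "\<And>k. k < n \<Longrightarrow> g k * (1 - (d k)\<^sup>2) = 1"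
  shows "(W - real_diag n d) * real_diag n g * (mat_adj W - real_diag n d)
    = (1\<^sub>m n - W * real_diag n d) * real_diag n g * mat_adj (1\<^sub>m n - W * real_diag n d)"
    (is "?L = ?R")
proof (rule eq_matI)
  have Wc: "W \<in> carrier_mat n n" using W by (rule unitary_mat_carrier)
  fix i j assume "i < dim_row ?R" and "j < dim_col ?R"
  hence i: "i < n" and j: "j < n" using Wc by auto
  let ?\<delta> = "\<lambda>a b. if a = b then 1 else 0 :: complex"
  let ?d = "\<lambda>k. complex_of_real (d k)" and ?g = "\<lambda>k. complex_of_real (g k)"
  have "?L $$ (i, j) = (\<Sum>k<n. (W $$ (i, k) - ?\<delta> i k * ?d k) * ?g k * (cnj (W $$ (j, k)) - ?\<delta> k j * ?d k))"
    using Wc i j by (subst index_mult_mat_diag_mult[of _ n n _ n]) (auto intro!: sum.cong)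
  also have "\<dots> = (\<Sum>k<n. (?\<delta> i k - W $$ (i, k) * ?d k) * ?g k * (?\<delta> k j - ?d k * cnj (W $$ (j, k)))
      + (W $$ (i, k) * cnj (W $$ (j, k)) - ?\<delta> i k * ?\<delta> k j))"
  proof (rule sum.cong[OF refl])
    fix k assume "k \<in> {..<n}"
    hence "?g k * (1 - ?d k * ?d k) = 1" using arg_cong[OF g[of k], of complex_of_real] by (simp add: power2_eq_square)
    thus "(W $$ (i, k) - ?\<delta> i k * ?d k) * ?g k * (cnj (W $$ (j, k)) - ?\<delta> k j * ?d k)
      = (?\<delta> i k - W $$ (i, k) * ?d k) * ?g k * (?\<delta> k j - ?d k * cnj (W $$ (j, k)))
      + (W $$ (i, k) * cnj (W $$ (j, k)) - ?\<delta> i k * ?\<delta> k j)"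
      using hermitian_form_term[of "W $$ (i, k)" "?\<delta> i k" "?d k" "?g k" "cnj (W $$ (j, k))" "?\<delta> k j"] by simp
  qed
  also have "\<dots> = ?R $$ (i, j) + ((W * mat_adj W) $$ (i, j) - 1\<^sub>m n $$ (i, j))"
  proof -
    have Ac: "1\<^sub>m n - W * real_diag n d \<in> carrier_mat n n" using Wc by auto
    have "?R $$ (i, j) = (\<Sum>k<n. (?\<delta> i k - W $$ (i, k) * ?d k) * ?g k * (?\<delta> k j - ?d k * cnj (W $$ (j, k))))"
      using Wc i j by (subst index_mult_mat_diag_mult[OF Ac mat_adj_carrier[OF Ac] i j])
        (auto intro!: sum.cong simp: index_one_minus_mult_real_diag mult.commute simp del: index_minus_mat(1))
    moreover have "(W * mat_adj W) $$ (i, j) = (\<Sum>k<n. W $$ (i, k) * cnj (W $$ (j, k)))"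
      using Wc i j by (simp add: index_mult_mat scalar_prod_def atLeast0LessThan)
    moreover have "(\<Sum>k<n. ?\<delta> i k * ?\<delta> k j) = (\<Sum>k<n. if k = i then ?\<delta> i j else 0)"
      by (intro sum.cong) auto
    ultimately show ?thesis using i j by (simp add: sum.distrib sum_subtractf)
  qed
  also have "\<dots> = ?R $$ (i, j)" using unitary_mat_right_inverse[OF W] by simp
  finally show "?L $$ (i, j) = ?R $$ (i, j)" .
qed (use unitary_mat_carrier[OF W] in auto)

lemma cayley_transform_identity:
  fixes W D Ai :: "'a :: comm_ring_1 mat"
  assumes W: "W \<in> carrier_mat n n" and D: "D \<in> carrier_mat n n" and Ai: "Ai \<in> carrier_mat n n"
    and inv: "(1\<^sub>m n - W * D) * Ai = 1\<^sub>m n"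
  shows "(1\<^sub>m n - W * D) * (1\<^sub>m n + Ai * (W - D) * D) = 1\<^sub>m n - D * D"
proof -
  let ?A = "1\<^sub>m n - W * D"
  have A: "?A \<in> carrier_mat n n" using W D by auto
  have X: "Ai * (W - D) * D \<in> carrier_mat n n" using Ai W D by auto
  have "?A * (1\<^sub>m n + Ai * (W - D) * D) = ?A + ?A * (Ai * (W - D) * D)"
    using A X by (simp add: mult_add_distrib_mat[OF A one_carrier_mat X] right_mult_one_mat[OF A])
  also have "?A * (Ai * (W - D) * D) = (?A * Ai) * (W - D) * D"
    using A Ai W D by (simp add: assoc_mult_mat[of _ n n _ n _ n] mult_carrier_mat[of _ n n _ n]
        minus_carrier_mat)
  also have "\<dots> = W * D - D * D" using W D by (simp add: inv minus_mult_distrib_mat[of _ n n])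
  also have "?A + (W * D - D * D) = 1\<^sub>m n - D * D" using W D by (intro eq_matI) auto
  finally show ?thesis .
qed

lemma unitary_diag_scaling:
  assumes V: "V \<in> carrier_mat n n" and s: "\<And>k. k < n \<Longrightarrow> s k \<noteq> 0"
    and VG: "V * real_diag n (\<lambda>k. (s k)\<^sup>2) * mat_adj V = real_diag n (\<lambda>k. (s k)\<^sup>2)"
  shows "unitary_mat n (real_diag n (\<lambda>k. 1 / s k) * V * real_diag n s)"
proof -
  let ?T = "real_diag n (\<lambda>k. 1 / s k)" and ?S = "real_diag n s"
  let ?V' = "?T * V * ?S"
  have V': "?V' \<in> carrier_mat n n" using V by auto
  have SS: "?S * ?S = real_diag n (\<lambda>k. (s k)\<^sup>2)" by (simp add: power2_eq_square)
  have TGT: "?T * real_diag n (\<lambda>k. (s k)\<^sup>2) * ?T = 1\<^sub>m n"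
    using s by (intro eq_matI) (auto simp: power2_eq_square simp flip: of_real_mult)
  have "?V' * mat_adj ?V' = ?T * (V * (?S * ?S) * mat_adj V) * ?T"
    using V by (simp add: mat_adj_mult[of _ n n _ n] assoc_mult_mat[of _ n n _ n _ n]
        mult_carrier_mat[of _ n n _ n] del: mat_diag_diag)
  hence "?V' * mat_adj ?V' = 1\<^sub>m n" by (simp only: SS VG TGT)
  thus ?thesis using mat_mult_left_right_inverse[OF V'] V' unfolding unitary_mat_def by auto
qed

lemma det_one_plus_diag_scaled:
  assumes X: "X \<in> carrier_mat n n" and s: "\<And>k. k < n \<Longrightarrow> s k \<noteq> 0"
  shows "det (1\<^sub>m n + real_diag n (\<lambda>k. 1 / s k) * X * real_diag n s * real_diag n d)
    = det (1\<^sub>m n + X * real_diag n d)"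
proof -
  let ?T = "real_diag n (\<lambda>k. 1 / s k)" and ?S = "real_diag n s"
  have "1\<^sub>m n + ?T * X * ?S * real_diag n d = ?T * (1\<^sub>m n + X * real_diag n d) * ?S"
  proof (rule eq_matI)
    fix i j assume "i < dim_row (?T * (1\<^sub>m n + X * real_diag n d) * ?S)"
      and "j < dim_col (?T * (1\<^sub>m n + X * real_diag n d) * ?S)"
    hence i: "i < n" and j: "j < n" by auto
    have XS: "?T * X * ?S \<in> carrier_mat n n" and XD: "1\<^sub>m n + X * real_diag n d \<in> carrier_mat n n"
      using X by auto
    show "(1\<^sub>m n + ?T * X * ?S * real_diag n d) $$ (i, j) = (?T * (1\<^sub>m n + X * real_diag n d) * ?S) $$ (i, j)"
      using i j X s index_mult_mat_diag[OF XS i j] index_mult_mat_diag[OF X i j]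
      by (simp add: index_mat_diag_mult_mat_diag[OF XD i j] index_mat_diag_mult_mat_diag[OF X i j]
          del: index_mult_mat(1))
  qed (use X in auto)
  moreover have XD: "1\<^sub>m n + X * real_diag n d \<in> carrier_mat n n" using X by auto
  moreover have "det ?T * det ?S = 1" using s by (simp add: det_mat_diag prod.distrib[symmetric])
  ultimately show ?thesis
    by (simp add: det_mult[OF mult_carrier_mat[OF mat_diag_dim XD] mat_diag_dim] det_mult[OF mat_diag_dim XD])
qed

lemma cayley_transform_isometry:
  assumes W: "unitary_mat n W" and g: "\<And>k. k < n \<Longrightarrow> g k * (1 - (d k)\<^sup>2) = 1"
    and Ai: "Ai \<in> carrier_mat n n" and inv: "(1\<^sub>m n - W * real_diag n d) * Ai = 1\<^sub>m n"
  defines "V \<equiv> Ai * (W - real_diag n d)"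
  shows "V * real_diag n g * mat_adj V = real_diag n g"
proof -
  let ?D = "real_diag n d" and ?G = "real_diag n g" and ?A = "1\<^sub>m n - W * real_diag n d"
  have Wc: "W \<in> carrier_mat n n" using W by (rule unitary_mat_carrier)
  have A: "?A \<in> carrier_mat n n" using Wc by auto
  have AiA: "Ai * ?A = 1\<^sub>m n" using mat_mult_left_right_inverse[OF A Ai inv] .
  have "V * ?G * mat_adj V = Ai * ((W - ?D) * ?G * (mat_adj W - ?D)) * mat_adj Ai"
    using Wc Ai unfolding V_def
    by (simp add: mat_adj_mult[of _ n n _ n] mat_adj_minus[of _ n n] assoc_mult_mat[of _ n n _ n _ n]
        mult_carrier_mat[of _ n n _ n] minus_carrier_mat)
  also have "(W - ?D) * ?G * (mat_adj W - ?D) = ?A * ?G * mat_adj ?A" by (rule hermitian_form_identity[OF W g])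
  also have "Ai * (?A * ?G * mat_adj ?A) * mat_adj Ai = (Ai * ?A) * ?G * mat_adj (Ai * ?A)"
    using Wc Ai A by (simp add: mat_adj_mult[of _ n n _ n] assoc_mult_mat[of _ n n _ n _ n]
        mult_carrier_mat[of _ n n _ n])
  finally show ?thesis by (simp add: AiA)
qed

lemma diag_scaled_mult_real_diag_eq:
  assumes X: "X \<in> carrier_mat n n" and s: "\<And>k. k < n \<Longrightarrow> s k \<noteq> 0"
    and eq: "real_diag n (\<lambda>k. 1 / s k) * X * real_diag n s * real_diag n d = real_diag n d"
  shows "X * real_diag n d = real_diag n d"
proof (rule eq_matI)
  fix i j assume "i < dim_row (real_diag n d)" and "j < dim_col (real_diag n d)"
  hence i: "i < n" and j: "j < n" by auto
  have XS: "real_diag n (\<lambda>k. 1 / s k) * X * real_diag n s \<in> carrier_mat n n" using X by auto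
  have "complex_of_real (1 / s i) * X $$ (i, j) * complex_of_real (s j) * complex_of_real (d j)
      = (real_diag n (\<lambda>k. 1 / s k) * X * real_diag n s * real_diag n d) $$ (i, j)"
    by (simp only: index_mult_mat_diag[OF XS i j] index_mat_diag_mult_mat_diag[OF X i j])
  also have "\<dots> = (if i = j then complex_of_real (d j) else 0)" unfolding eq using i j by simp
  finally have "complex_of_real (1 / s i) * X $$ (i, j) * complex_of_real (s j) * complex_of_real (d j)
      = (if i = j then complex_of_real (d j) else 0)" .
  hence "X $$ (i, j) * complex_of_real (d j) = (if i = j then complex_of_real (d j) else 0)"
    using s[OF i] s[OF j] by (cases "i = j") (auto simp: field_simps)
  thus "(X * real_diag n d) $$ (i, j) = real_diag n d $$ (i, j)"
    using index_mult_mat_diag[OF X i j] i j by simp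
qed (use X in auto)

lemma mult_real_diag_eq_of_cayley_fixed:
  assumes W: "W \<in> carrier_mat n n" and d: "\<And>k. k < n \<Longrightarrow> d k \<noteq> -1"
    and eq: "(1\<^sub>m n - W * real_diag n d) * (1\<^sub>m n + real_diag n d) = 1\<^sub>m n - real_diag n d * real_diag n d"
  shows "W * real_diag n d = real_diag n d"
proof (rule eq_matI)
  fix i j assume "i < dim_row (real_diag n d)" and "j < dim_col (real_diag n d)"
  hence i: "i < n" and j: "j < n" by auto
  have A: "1\<^sub>m n - W * real_diag n d \<in> carrier_mat n n" using W by auto
  have "1\<^sub>m n + real_diag n d = real_diag n (\<lambda>k. 1 + d k)" by (rule eq_matI) auto
  hence "(1\<^sub>m n - W * real_diag n d) * real_diag n (\<lambda>k. 1 + d k) = real_diag n (\<lambda>k. 1 - (d k)\<^sup>2)"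
    using eq by (simp only: one_minus_real_diag_square)
  from arg_cong[OF this, of "\<lambda>M. M $$ (i, j)"]
  have "((if i = j then 1 else 0) - W $$ (i, j) * complex_of_real (d j)) * (1 + complex_of_real (d j))
      = (if i = j then (1 - complex_of_real (d j)) * (1 + complex_of_real (d j)) else 0)"
    using i j W by (simp add: index_mult_mat_diag[OF A i j] index_one_minus_mult_real_diag
        power2_eq_square algebra_simps del: index_mult_mat(1) index_minus_mat(1))
  moreover have "1 + complex_of_real (d j) \<noteq> 0"
    using d[OF j] by (metis add.commute add_eq_0_iff of_real_1 of_real_add of_real_eq_0_iff of_real_minus)
  ultimately have "W $$ (i, j) * complex_of_real (d j) = (if i = j then complex_of_real (d j) else 0)"
    by (cases "i = j") auto
  thus "(W * real_diag n d) $$ (i, j) = real_diag n d $$ (i, j)"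
    using index_mult_mat_diag[OF W i j] i j by simp
qed (use W in auto)

lemma exists_unitary_det_complement:
  assumes W: "unitary_mat n W" and d: "\<And>k. k < n \<Longrightarrow> 0 \<le> d k \<and> d k < 1"
    and nz: "det (1\<^sub>m n - W * real_diag n d) \<noteq> 0"
  shows "\<exists>V. unitary_mat n V
    \<and> det (1\<^sub>m n - W * real_diag n d) * det (1\<^sub>m n + V * real_diag n d) = complex_of_real (\<Prod>k<n. 1 - (d k)\<^sup>2)
    \<and> (V * real_diag n d = real_diag n d \<longrightarrow> W * real_diag n d = real_diag n d)"
proof -
  let ?D = "real_diag n d" and ?A = "1\<^sub>m n - W * real_diag n d"
  have Wc: "W \<in> carrier_mat n n" using W by (rule unitary_mat_carrier)
  have A: "?A \<in> carrier_mat n n" using Wc by auto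
  obtain Ai where Ai: "Ai \<in> carrier_mat n n" and inv: "?A * Ai = 1\<^sub>m n"
    using det_non_zero_imp_unit[OF A nz] unfolding Units_def by (auto simp: ring_mat_def)
  define V0 where "V0 = Ai * (W - ?D)"
  have V0: "V0 \<in> carrier_mat n n" using Ai Wc by (auto simp: V0_def)
  \<comment> \<open>real_diag n s is the square root of G = (I - D^2)^-1\<close>
  define s where "s k = 1 / sqrt (1 - (d k)\<^sup>2)" for k
  have s: "s k \<noteq> 0" and g: "(s k)\<^sup>2 * (1 - (d k)\<^sup>2) = 1" if "k < n" for k
  proof -
    have "(d k)\<^sup>2 < 1" using d[OF that] by (simp add: abs_square_less_1)
    thus "s k \<noteq> 0" and "(s k)\<^sup>2 * (1 - (d k)\<^sup>2) = 1" by (auto simp: s_def power_divide)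
  qed
  define V where "V = real_diag n (\<lambda>k. 1 / s k) * V0 * real_diag n s"
  have "unitary_mat n V"
    unfolding V_def using V0 s cayley_transform_isometry[OF W g Ai inv] unfolding V0_def
    by (intro unitary_diag_scaling) auto
  moreover have "det ?A * det (1\<^sub>m n + V * ?D) = complex_of_real (\<Prod>k<n. 1 - (d k)\<^sup>2)"
  proof -
    have "det (1\<^sub>m n + V * ?D) = det (1\<^sub>m n + V0 * ?D)"
      unfolding V_def by (rule det_one_plus_diag_scaled[OF V0 s])
    hence "det ?A * det (1\<^sub>m n + V * ?D) = det (?A * (1\<^sub>m n + V0 * ?D))"
      using A V0 by (simp add: det_mult[of _ n])
    also have "?A * (1\<^sub>m n + V0 * ?D) = 1\<^sub>m n - ?D * ?D"
      unfolding V0_def by (rule cayley_transform_identity[OF Wc _ Ai inv]) simp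
    also have "1\<^sub>m n - ?D * ?D = real_diag n (\<lambda>k. 1 - (d k)\<^sup>2)"
      by (rule one_minus_real_diag_square)
    finally show ?thesis by (simp add: det_mat_diag)
  qed
  moreover have "W * ?D = ?D" if "V * ?D = ?D"
  proof -
    have "V0 * ?D = ?D" using diag_scaled_mult_real_diag_eq[OF V0 s] that by (auto simp: V_def)
    hence "?A * (1\<^sub>m n + ?D) = 1\<^sub>m n - ?D * ?D"
      using cayley_transform_identity[OF Wc _ Ai inv] by (simp add: V0_def)
    thus ?thesis using mult_real_diag_eq_of_cayley_fixed[OF Wc] d by force
  qed
  ultimately show ?thesis by blast
qed

theorem cmod_det_one_minus_mult_real_diag_ge:
  assumes W: "unitary_mat n W" and d: "\<And>k. k < n \<Longrightarrow> 0 \<le> d k \<and> d k < 1"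
    and nz: "det (1\<^sub>m n - W * real_diag n d) \<noteq> 0"
  shows "(\<Prod>k<n. 1 - d k) \<le> cmod (det (1\<^sub>m n - W * real_diag n d))"
    and "cmod (det (1\<^sub>m n - W * real_diag n d)) = (\<Prod>k<n. 1 - d k) \<Longrightarrow> W * real_diag n d = real_diag n d"
proof -
  let ?A = "1\<^sub>m n - W * real_diag n d" and ?P = "\<Prod>k<n. 1 + d k" and ?M = "\<Prod>k<n. 1 - d k"
  obtain V where V: "unitary_mat n V"
    and prod: "det ?A * det (1\<^sub>m n + V * real_diag n d) = complex_of_real (\<Prod>k<n. 1 - (d k)\<^sup>2)"
    and fixed: "V * real_diag n d = real_diag n d \<Longrightarrow> W * real_diag n d = real_diag n d"
    using exists_unitary_det_complement[OF W d nz] by blast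
  have d0: "\<And>k. k < n \<Longrightarrow> 0 \<le> d k" using d by simp
  have P: "0 < ?P" and M: "0 < ?M" using d by (auto intro!: prod_pos simp: add_pos_nonneg)
  have "cmod (det ?A) * cmod (det (1\<^sub>m n + V * real_diag n d))
      = cmod (complex_of_real (\<Prod>k<n. 1 - (d k)\<^sup>2))"
    unfolding prod[symmetric] norm_mult ..
  also have "\<dots> = \<bar>\<Prod>k<n. 1 - (d k)\<^sup>2\<bar>" by (rule norm_of_real)
  also have "\<dots> = (\<Prod>k<n. 1 - (d k)\<^sup>2)"
    using d by (intro abs_of_nonneg prod_nonneg) (simp add: power_le_one less_imp_le)
  also have "\<dots> = (\<Prod>k<n. (1 - d k) * (1 + d k))" by (simp add: power2_eq_square algebra_simps)
  also have "\<dots> = ?M * ?P" by (rule prod.distrib)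
  finally have key: "cmod (det ?A) * cmod (det (1\<^sub>m n + V * real_diag n d)) = ?M * ?P" .
  have "?M * ?P = cmod (det ?A) * cmod (det (1\<^sub>m n + V * real_diag n d))" by (rule key[symmetric])
  also have "\<dots> \<le> cmod (det ?A) * ?P"
    using cmod_det_one_plus_mult_real_diag(1)[of n V d] V d0 by (simp add: mult_left_mono)
  finally show "?M \<le> cmod (det ?A)" using P by simp
  assume "cmod (det ?A) = ?M"
  hence "?M * cmod (det (1\<^sub>m n + V * real_diag n d)) = ?M * ?P" using key by (simp only:)
  hence "cmod (det (1\<^sub>m n + V * real_diag n d)) = ?P" using M by (metis less_irrefl mult_left_cancel)
  thus "W * real_diag n d = real_diag n d"
    using fixed cmod_det_one_plus_mult_real_diag(2)[of n V d] V d0 by blast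
qed

lemma psd_unitary_reduction:
  assumes psd: "psd_mat n Z" and eig: "char_poly Z = (\<Prod>k<n. [:- complex_of_real (r k), 1:])"
    and U: "unitary_mat n U"
  obtains W where "unitary_mat n W"
    and "det (1\<^sub>m n - U * Z) = det (1\<^sub>m n - W * real_diag n r)"
    and "char_poly (U * Z) = char_poly (W * real_diag n r)"
    and "W * real_diag n r = real_diag n r \<Longrightarrow> U * Z = Z"
    and "W * real_diag n r = - real_diag n r \<Longrightarrow> U * Z = - Z"
proof -
  have Z: "Z \<in> carrier_mat n n" using psd unfolding psd_mat_def by simp
  have Uc: "U \<in> carrier_mat n n" using U by (rule unitary_mat_carrier)
  obtain V where V: "unitary_mat n V" and D: "mat_adj V * Z * V = real_diag n r"
    using psd_unitary_diagonalisation[OF psd eig] by blast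
  have Vc: "V \<in> carrier_mat n n" using V by (rule unitary_mat_carrier)
  define W where "W = mat_adj V * U * V"
  have W: "unitary_mat n W" unfolding W_def by (intro unitary_mat_mult unitary_mat_adj V U)
  have UZ: "U * Z \<in> carrier_mat n n" using Uc Z by simp
  have conj: "mat_adj V * (U * Z) * V = W * real_diag n r"
    unfolding W_def D[symmetric] by (rule unitary_conj_mult[OF V Uc Z])
  have X: "1\<^sub>m n - U * Z \<in> carrier_mat n n" by (rule minus_carrier_mat[OF UZ])
  have "det (1\<^sub>m n - U * Z) = det (mat_adj V * (1\<^sub>m n - U * Z) * V)"
    by (rule det_similar[OF similar_mat_unitary_conj[OF V X], symmetric])
  also have "\<dots> = det (1\<^sub>m n - W * real_diag n r)" by (simp add: unitary_conj_one_minus[OF V UZ] conj)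
  finally have "det (1\<^sub>m n - U * Z) = det (1\<^sub>m n - W * real_diag n r)" .
  moreover have "char_poly (U * Z) = char_poly (W * real_diag n r)"
    using char_poly_similar[OF similar_mat_unitary_conj[OF V UZ]] conj by simp
  moreover have "U * Z = Z" if "W * real_diag n r = real_diag n r"
    using conj that D by (intro unitary_conj_cancel[OF V UZ Z]) simp
  moreover have "U * Z = - Z" if "W * real_diag n r = - real_diag n r"
  proof (rule unitary_conj_cancel[OF V UZ])
    show "- Z \<in> carrier_mat n n" using Z by simp
    have "mat_adj V * (- Z) * V = - (mat_adj V * Z * V)" using Vc Z by simp
    thus "mat_adj V * (U * Z) * V = mat_adj V * (- Z) * V" using conj that D by simp
  qed
  ultimately show thesis using that W by blast
qed

lemma cmod_prod_of_real:
  assumes "\<And>k. k < n \<Longrightarrow> 0 \<le> f k"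
  shows "cmod (\<Prod>k<n. complex_of_real (f k)) = (\<Prod>k<n. f k)"
proof -
  have "0 \<le> (\<Prod>k<n. f k)" using assms by (auto intro!: prod_nonneg)
  thus ?thesis by (simp only: of_real_prod[symmetric] norm_of_real abs_of_nonneg)
qed

theorem cmod_det_one_minus_unitary_psd_le:
  assumes psd: "psd_mat n Z" and eig: "char_poly Z = (\<Prod>k<n. [:- complex_of_real (r k), 1:])"
    and U: "unitary_mat n U"
  shows "cmod (det (1\<^sub>m n - U * Z)) \<le> (\<Prod>k<n. 1 + r k)"
    and "cmod (det (1\<^sub>m n - U * Z)) = (\<Prod>k<n. 1 + r k) \<longleftrightarrow>
      char_poly (U * Z) = (\<Prod>k<n. [:complex_of_real (r k), 1:])"
    and "cmod (det (1\<^sub>m n - U * Z)) = (\<Prod>k<n. 1 + r k) \<Longrightarrow> U * Z = - Z"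
proof -
  obtain W where W: "unitary_mat n W"
    and det: "det (1\<^sub>m n - U * Z) = det (1\<^sub>m n - W * real_diag n r)"
    and cp: "char_poly (U * Z) = char_poly (W * real_diag n r)"
    and neg: "W * real_diag n r = - real_diag n r \<Longrightarrow> U * Z = - Z"
    using psd_unitary_reduction[OF psd eig U] by blast
  have Wc: "W \<in> carrier_mat n n" using W by (rule unitary_mat_carrier)
  have r: "\<And>k. k < n \<Longrightarrow> 0 \<le> r k" using psd_eigenvalues_nonneg[OF psd eig] by blast
  have cols: "\<And>k. k < n \<Longrightarrow> csq_norm (col W k) \<le> 1" using csq_norm_col_unitary[OF W] by simp
  show "cmod (det (1\<^sub>m n - U * Z)) \<le> (\<Prod>k<n. 1 + r k)"
    unfolding det by (rule cmod_det_one_minus_mult_real_diag_le[OF Wc cols r])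
  have diag: "cmod (det (1\<^sub>m n - U * Z)) = (\<Prod>k<n. 1 + r k) \<Longrightarrow> W * real_diag n r = - real_diag n r"
    unfolding det by (rule cmod_det_one_minus_mult_real_diag_eq[OF Wc cols r])
  thus "cmod (det (1\<^sub>m n - U * Z)) = (\<Prod>k<n. 1 + r k) \<Longrightarrow> U * Z = - Z" using neg by blast
  show "cmod (det (1\<^sub>m n - U * Z)) = (\<Prod>k<n. 1 + r k) \<longleftrightarrow>
      char_poly (U * Z) = (\<Prod>k<n. [:complex_of_real (r k), 1:])"
  proof
    assume "cmod (det (1\<^sub>m n - U * Z)) = (\<Prod>k<n. 1 + r k)"
    hence "char_poly (U * Z) = char_poly (mat_diag n (\<lambda>k. - complex_of_real (r k)))"
      using diag cp by (simp add: uminus_mat_diag)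
    thus "char_poly (U * Z) = (\<Prod>k<n. [:complex_of_real (r k), 1:])" by (simp add: char_poly_mat_diag)
  next
    assume "char_poly (U * Z) = (\<Prod>k<n. [:complex_of_real (r k), 1:])"
    moreover have "U * Z \<in> carrier_mat n n"
      using U psd mult_carrier_mat[of U n n Z n] unfolding unitary_mat_def psd_mat_def by simp
    ultimately have "det (1\<^sub>m n - U * Z) = (\<Prod>k<n. 1 + complex_of_real (r k))"
      using det_one_minus_linear_char_poly[of "U * Z" n "\<lambda>k. - complex_of_real (r k)"] by simp
    thus "cmod (det (1\<^sub>m n - U * Z)) = (\<Prod>k<n. 1 + r k)"
      using cmod_prod_of_real[of n "\<lambda>k. 1 + r k"] r by simp
  qed
qed

theorem cmod_det_one_minus_unitary_psd_ge:
  assumes psd: "psd_mat n Z" and eig: "char_poly Z = (\<Prod>k<n. [:- complex_of_real (r k), 1:])"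
    and U: "unitary_mat n U" and r1: "\<And>k. k < n \<Longrightarrow> r k < 1"
    and nz: "det (1\<^sub>m n - U * Z) \<noteq> 0"
  shows "(\<Prod>k<n. 1 - r k) \<le> cmod (det (1\<^sub>m n - U * Z))"
    and "cmod (det (1\<^sub>m n - U * Z)) = (\<Prod>k<n. 1 - r k) \<longleftrightarrow>
      char_poly (U * Z) = (\<Prod>k<n. [:- complex_of_real (r k), 1:])"
    and "cmod (det (1\<^sub>m n - U * Z)) = (\<Prod>k<n. 1 - r k) \<Longrightarrow> U * Z = Z"
proof -
  obtain W where W: "unitary_mat n W"
    and det: "det (1\<^sub>m n - U * Z) = det (1\<^sub>m n - W * real_diag n r)"
    and cp: "char_poly (U * Z) = char_poly (W * real_diag n r)"
    and pos: "W * real_diag n r = real_diag n r \<Longrightarrow> U * Z = Z"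
    using psd_unitary_reduction[OF psd eig U] by blast
  have r: "\<And>k. k < n \<Longrightarrow> 0 \<le> r k \<and> r k < 1" using psd_eigenvalues_nonneg[OF psd eig] r1 by blast
  have nz': "det (1\<^sub>m n - W * real_diag n r) \<noteq> 0" using nz det by simp
  show "(\<Prod>k<n. 1 - r k) \<le> cmod (det (1\<^sub>m n - U * Z))"
    unfolding det by (rule cmod_det_one_minus_mult_real_diag_ge(1)[OF W r nz'])
  have diag: "cmod (det (1\<^sub>m n - U * Z)) = (\<Prod>k<n. 1 - r k) \<Longrightarrow> W * real_diag n r = real_diag n r"
    unfolding det by (rule cmod_det_one_minus_mult_real_diag_ge(2)[OF W r nz'])
  thus "cmod (det (1\<^sub>m n - U * Z)) = (\<Prod>k<n. 1 - r k) \<Longrightarrow> U * Z = Z" using pos by blast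
  show "cmod (det (1\<^sub>m n - U * Z)) = (\<Prod>k<n. 1 - r k) \<longleftrightarrow>
      char_poly (U * Z) = (\<Prod>k<n. [:- complex_of_real (r k), 1:])"
  proof
    assume "cmod (det (1\<^sub>m n - U * Z)) = (\<Prod>k<n. 1 - r k)"
    thus "char_poly (U * Z) = (\<Prod>k<n. [:- complex_of_real (r k), 1:])"
      using diag cp by (simp add: char_poly_mat_diag)
  next
    assume "char_poly (U * Z) = (\<Prod>k<n. [:- complex_of_real (r k), 1:])"
    moreover have "U * Z \<in> carrier_mat n n"
      using U psd mult_carrier_mat[of U n n Z n] unfolding unitary_mat_def psd_mat_def by simp
    ultimately have "det (1\<^sub>m n - U * Z) = (\<Prod>k<n. 1 - complex_of_real (r k))"
      using det_one_minus_linear_char_poly[of "U * Z" n "\<lambda>k. complex_of_real (r k)"] by simp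
    thus "cmod (det (1\<^sub>m n - U * Z)) = (\<Prod>k<n. 1 - r k)"
      using cmod_prod_of_real[of n "\<lambda>k. 1 - r k"] r by (simp add: less_imp_le)
  qed
qed

lemma det_one_minus_square_psd:
  assumes psd: "psd_mat n Z" and eig: "char_poly Z = (\<Prod>k<n. [:- complex_of_real (r k), 1:])"
  shows "det (1\<^sub>m n - Z * Z) = complex_of_real (\<Prod>k<n. 1 - (r k)\<^sup>2)"
proof -
  have Z: "Z \<in> carrier_mat n n" using psd unfolding psd_mat_def by simp
  obtain V where V: "unitary_mat n V" and D: "mat_adj V * Z * V = real_diag n r"
    using psd_unitary_diagonalisation[OF psd eig] by blast
  have ZZ: "Z * Z \<in> carrier_mat n n" and X: "1\<^sub>m n - Z * Z \<in> carrier_mat n n" using Z by auto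
  have "det (1\<^sub>m n - Z * Z) = det (mat_adj V * (1\<^sub>m n - Z * Z) * V)"
    by (rule det_similar[OF similar_mat_unitary_conj[OF V X], symmetric])
  also have "mat_adj V * (1\<^sub>m n - Z * Z) * V = 1\<^sub>m n - real_diag n r * real_diag n r"
    by (simp add: unitary_conj_one_minus[OF V ZZ] unitary_conj_mult[OF V Z Z] D)
  also have "\<dots> = real_diag n (\<lambda>k. 1 - (r k)\<^sup>2)" by (rule one_minus_real_diag_square)
  finally show ?thesis by (simp add: det_mat_diag)
qed

lemma cmod_det_one_minus_square_psd:
  assumes psd: "psd_mat n Z" and eig: "char_poly Z = (\<Prod>k<n. [:- complex_of_real (r k), 1:])"
  shows "cmod (det (1\<^sub>m n - Z * Z)) = (\<Prod>k<n. \<bar>1 - r k\<bar>) * (\<Prod>k<n. 1 + r k)"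
proof -
  have r: "\<And>k. k < n \<Longrightarrow> 0 \<le> r k" using psd_eigenvalues_nonneg[OF psd eig] by blast
  have "cmod (det (1\<^sub>m n - Z * Z)) = \<bar>\<Prod>k<n. 1 - (r k)\<^sup>2\<bar>"
    unfolding det_one_minus_square_psd[OF psd eig] by (rule norm_of_real)
  also have "\<dots> = (\<Prod>k<n. \<bar>1 - r k\<bar> * (1 + r k))"
    unfolding abs_prod
  proof (rule prod.cong[OF refl])
    fix k assume "k \<in> {..<n}"
    moreover have "1 - (r k)\<^sup>2 = (1 - r k) * (1 + r k)" by (simp add: power2_eq_square algebra_simps)
    ultimately show "\<bar>1 - (r k)\<^sup>2\<bar> = \<bar>1 - r k\<bar> * (1 + r k)" using r[of k] by (simp add: abs_mult)
  qed
  finally show ?thesis by (simp add: prod.distrib)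
qed

lemma cmod_det_one_minus_eigenvalues:
  assumes psd: "psd_mat n Z" and eig: "char_poly Z = (\<Prod>k<n. [:- complex_of_real (r k), 1:])"
  shows "cmod (det (1\<^sub>m n - Z)) = (\<Prod>k<n. \<bar>1 - r k\<bar>)"
proof -
  have Z: "Z \<in> carrier_mat n n" using psd unfolding psd_mat_def by simp
  have "det (1\<^sub>m n - Z) = (\<Prod>k<n. complex_of_real (1 - r k))"
    using det_one_minus_linear_char_poly[OF Z eig] by simp
  thus ?thesis by (simp only: prod_norm[symmetric] norm_of_real)
qed

lemma mult_right_cancel_det_nonzero:
  fixes Z :: "'a :: field mat"
  assumes Z: "Z \<in> carrier_mat n n" and dZ: "det Z \<noteq> 0"
    and A: "A \<in> carrier_mat n n" and B: "B \<in> carrier_mat n n" and eq: "A * Z = B * Z"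
  shows "A = B"
proof -
  obtain Zi where Zi: "Zi \<in> carrier_mat n n" and ZZi: "Z * Zi = 1\<^sub>m n"
    using det_non_zero_imp_unit[OF Z dZ] unfolding Units_def by (auto simp: ring_mat_def)
  have "A = A * Z * Zi" using A Z Zi ZZi by (simp add: assoc_mult_mat[of _ n n _ n _ n])
  also have "\<dots> = B" using B Z Zi ZZi by (simp add: eq assoc_mult_mat[of _ n n _ n _ n])
  finally show ?thesis .
qed

lemma divide_vs_mult_divide_square:
  fixes a b q :: real
  assumes a: "0 < a" and b: "0 < b" and q: "0 < q"
  shows "a / b \<le> a * b / q\<^sup>2 \<longleftrightarrow> q \<le> b"
    and "a * b / q\<^sup>2 \<le> a / b \<longleftrightarrow> b \<le> q"
    and "a / b = a * b / q\<^sup>2 \<longleftrightarrow> q = b"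
proof -
  have "a / b \<le> a * b / q\<^sup>2 \<longleftrightarrow> a * q\<^sup>2 \<le> a * b\<^sup>2"
    using b q by (simp add: field_simps power2_eq_square)
  also have "\<dots> \<longleftrightarrow> q \<le> b" using a b q by (simp add: power_mono_iff)
  finally show "a / b \<le> a * b / q\<^sup>2 \<longleftrightarrow> q \<le> b" .
  have "a * b / q\<^sup>2 \<le> a / b \<longleftrightarrow> a * b\<^sup>2 \<le> a * q\<^sup>2"
    using b q by (simp add: field_simps power2_eq_square)
  also have "\<dots> \<longleftrightarrow> b \<le> q" using a b q by (simp add: power_mono_iff)
  finally show "a * b / q\<^sup>2 \<le> a / b \<longleftrightarrow> b \<le> q" .
  have "a / b = a * b / q\<^sup>2 \<longleftrightarrow> a * q\<^sup>2 = a * b\<^sup>2"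
    using b q by (simp add: field_simps power2_eq_square)
  also have "\<dots> \<longleftrightarrow> q = b" using a b q by (simp add: power2_eq_iff_nonneg)
  finally show "a / b = a * b / q\<^sup>2 \<longleftrightarrow> q = b" .
qed

lemma psd_unitary_det_ratio_lower:
  assumes psd: "psd_mat n Z" and eig: "char_poly Z = (\<Prod>k<n. [:- complex_of_real (r k), 1:])"
    and U: "unitary_mat n U" and nonsing: "det (1\<^sub>m n - U * Z) \<noteq> 0"
  defines "ratio \<equiv> cmod (det (1\<^sub>m n - Z * Z)) / (cmod (det (1\<^sub>m n - U * Z)))\<^sup>2"
  shows "(\<Prod>k<n. \<bar>1 - r k\<bar> / (1 + r k)) \<le> ratio"
    and "(\<Prod>k<n. \<bar>1 - r k\<bar> / (1 + r k)) = ratio \<longleftrightarrow>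
      eigenvalue Z 1 \<or> char_poly (U * Z) = (\<Prod>k<n. [:complex_of_real (r k), 1:])"
    and "det Z \<noteq> 0 \<Longrightarrow> det (1\<^sub>m n - Z) \<noteq> 0 \<Longrightarrow> U \<noteq> - 1\<^sub>m n \<Longrightarrow>
      (\<Prod>k<n. \<bar>1 - r k\<bar> / (1 + r k)) < ratio"
proof -
  let ?Q = "cmod (det (1\<^sub>m n - U * Z))" and ?P = "\<Prod>k<n. 1 + r k" and ?M = "\<Prod>k<n. \<bar>1 - r k\<bar>"
  have Z: "Z \<in> carrier_mat n n" using psd unfolding psd_mat_def by simp
  have r: "\<And>k. k < n \<Longrightarrow> 0 \<le> r k" using psd_eigenvalues_nonneg[OF psd eig] by blast
  note bound = cmod_det_one_minus_unitary_psd_le[OF psd eig U]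
  have Q: "0 < ?Q" using nonsing by simp
  have P: "0 < ?P" using r by (auto intro!: prod_pos add_pos_nonneg)
  have lhs: "(\<Prod>k<n. \<bar>1 - r k\<bar> / (1 + r k)) = ?M / ?P" by (rule prod_dividef)
  have rhs: "ratio = ?M * ?P / ?Q\<^sup>2" by (simp add: ratio_def cmod_det_one_minus_square_psd[OF psd eig])
  have "eigenvalue Z 1 \<longleftrightarrow> cmod (det (1\<^sub>m n - Z)) = 0" using eigenvalue_one_iff_det[OF Z] by simp
  hence ev: "eigenvalue Z 1 \<longleftrightarrow> ?M = 0" by (simp only: cmod_det_one_minus_eigenvalues[OF psd eig])
  show le: "(\<Prod>k<n. \<bar>1 - r k\<bar> / (1 + r k)) \<le> ratio"
  proof (cases "?M = 0")
    case False
    thus ?thesis using divide_vs_mult_divide_square(1)[OF _ P Q] bound(1) lhs rhs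
      by (simp add: less_le prod_nonneg)
  next
    case True
    show ?thesis unfolding lhs rhs True by simp
  qed
  show eq: "(\<Prod>k<n. \<bar>1 - r k\<bar> / (1 + r k)) = ratio \<longleftrightarrow>
      eigenvalue Z 1 \<or> char_poly (U * Z) = (\<Prod>k<n. [:complex_of_real (r k), 1:])"
  proof (cases "?M = 0")
    case False
    thus ?thesis using divide_vs_mult_divide_square(3)[OF _ P Q] bound(2) ev lhs rhs
      by (simp add: less_le prod_nonneg)
  next
    case True
    show ?thesis unfolding lhs rhs ev True by simp
  qed
  assume "det Z \<noteq> 0" and "det (1\<^sub>m n - Z) \<noteq> 0" and "U \<noteq> - 1\<^sub>m n"
  have "\<not> eigenvalue Z 1" using eigenvalue_one_iff_det[OF Z] \<open>det (1\<^sub>m n - Z) \<noteq> 0\<close> by simp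
  moreover have "?Q \<noteq> ?P"
  proof
    assume "?Q = ?P"
    hence "U * Z = - 1\<^sub>m n * Z" using bound(3) Z by simp
    hence "U = - 1\<^sub>m n"
      using mult_right_cancel_det_nonzero[OF Z \<open>det Z \<noteq> 0\<close>] U unfolding unitary_mat_def by simp
    with \<open>U \<noteq> - 1\<^sub>m n\<close> show False ..
  qed
  ultimately show "(\<Prod>k<n. \<bar>1 - r k\<bar> / (1 + r k)) < ratio" using le eq bound(2) by auto
qed

lemma psd_unitary_det_ratio_upper:
  assumes psd: "psd_mat n Z" and eig: "char_poly Z = (\<Prod>k<n. [:- complex_of_real (r k), 1:])"
    and U: "unitary_mat n U" and nonsing: "det (1\<^sub>m n - U * Z) \<noteq> 0"
    and r1: "\<And>k. k < n \<Longrightarrow> r k < 1"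
  defines "ratio \<equiv> Re (det (1\<^sub>m n - Z * Z)) / (cmod (det (1\<^sub>m n - U * Z)))\<^sup>2"
  shows "ratio \<le> (\<Prod>k<n. (1 + r k) / (1 - r k))"
    and "ratio = (\<Prod>k<n. (1 + r k) / (1 - r k)) \<longleftrightarrow>
      char_poly (U * Z) = (\<Prod>k<n. [:- complex_of_real (r k), 1:])"
    and "det Z \<noteq> 0 \<Longrightarrow> U \<noteq> 1\<^sub>m n \<Longrightarrow> ratio < (\<Prod>k<n. (1 + r k) / (1 - r k))"
proof -
  let ?Q = "cmod (det (1\<^sub>m n - U * Z))" and ?P = "\<Prod>k<n. 1 + r k" and ?N = "\<Prod>k<n. 1 - r k"
  have Z: "Z \<in> carrier_mat n n" using psd unfolding psd_mat_def by simp
  have r: "\<And>k. k < n \<Longrightarrow> 0 \<le> r k" using psd_eigenvalues_nonneg[OF psd eig] by blast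
  note bound = cmod_det_one_minus_unitary_psd_ge[OF psd eig U r1 nonsing]
  have Q: "0 < ?Q" using nonsing by simp
  have P: "0 < ?P" using r by (auto intro!: prod_pos add_pos_nonneg)
  have N: "0 < ?N" using r1 by (auto intro!: prod_pos)
  have rhs: "(\<Prod>k<n. (1 + r k) / (1 - r k)) = ?P / ?N" by (rule prod_dividef)
  have "Re (det (1\<^sub>m n - Z * Z)) = (\<Prod>k<n. 1 - (r k)\<^sup>2)"
    unfolding det_one_minus_square_psd[OF psd eig] by (rule Re_complex_of_real)
  also have "\<dots> = ?P * ?N" by (simp add: prod.distrib[symmetric] power2_eq_square algebra_simps)
  finally have lhs: "ratio = ?P * ?N / ?Q\<^sup>2" by (simp add: ratio_def)
  show le: "ratio \<le> (\<Prod>k<n. (1 + r k) / (1 - r k))"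
    unfolding lhs rhs using divide_vs_mult_divide_square(2)[OF P N Q] bound(1) by simp
  show eq: "ratio = (\<Prod>k<n. (1 + r k) / (1 - r k)) \<longleftrightarrow>
      char_poly (U * Z) = (\<Prod>k<n. [:- complex_of_real (r k), 1:])"
  proof -
    have "ratio = (\<Prod>k<n. (1 + r k) / (1 - r k)) \<longleftrightarrow> ?Q = ?N"
      unfolding lhs rhs eq_commute[of "?P * ?N / ?Q\<^sup>2"] by (rule divide_vs_mult_divide_square(3)[OF P N Q])
    thus ?thesis using bound(2) by blast
  qed
  assume "det Z \<noteq> 0" and "U \<noteq> 1\<^sub>m n"
  have "?Q \<noteq> ?N"
  proof
    assume "?Q = ?N"
    hence "U * Z = 1\<^sub>m n * Z" using bound(3) Z by simp
    hence "U = 1\<^sub>m n"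
      using mult_right_cancel_det_nonzero[OF Z \<open>det Z \<noteq> 0\<close>] U unfolding unitary_mat_def by simp
    with \<open>U \<noteq> 1\<^sub>m n\<close> show False ..
  qed
  thus "ratio < (\<Prod>k<n. (1 + r k) / (1 - r k))" using le eq bound(2) by auto
qed

theorem theorem3:
  fixes n :: nat and Z U :: "complex mat" and r :: "nat \<Rightarrow> real"
  assumes psd: "psd_mat n Z"
    and eig: "char_poly Z = (\<Prod>k<n. [:- complex_of_real (r k), 1:])"
    and unit: "unitary_mat n U"
    and nonsing: "det (1\<^sub>m n - U * Z) \<noteq> 0"
  shows "((\<Prod>k<n. \<bar>1 - r k\<bar> / (1 + r k))
           \<le> cmod (det (1\<^sub>m n - Z * Z)) / (cmod (det (1\<^sub>m n - U * Z)))\<^sup>2)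
    \<and> ((\<Prod>k<n. \<bar>1 - r k\<bar> / (1 + r k))
           = cmod (det (1\<^sub>m n - Z * Z)) / (cmod (det (1\<^sub>m n - U * Z)))\<^sup>2
         \<longleftrightarrow> eigenvalue Z 1 \<or>
             char_poly (U * Z) = (\<Prod>k<n. [:complex_of_real (r k), 1:]))
    \<and> (det Z \<noteq> 0 \<and> det (1\<^sub>m n - Z) \<noteq> 0 \<and> U \<noteq> - 1\<^sub>m n \<longrightarrow>
         (\<Prod>k<n. \<bar>1 - r k\<bar> / (1 + r k))
           < cmod (det (1\<^sub>m n - Z * Z)) / (cmod (det (1\<^sub>m n - U * Z)))\<^sup>2)
    \<and> ((\<forall>k<n. 0 \<le> r k \<and> r k < 1) \<longrightarrow>
         (Re (det (1\<^sub>m n - Z * Z)) / (cmod (det (1\<^sub>m n - U * Z)))\<^sup>2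
           \<le> (\<Prod>k<n. (1 + r k) / (1 - r k)))
       \<and> (Re (det (1\<^sub>m n - Z * Z)) / (cmod (det (1\<^sub>m n - U * Z)))\<^sup>2
           = (\<Prod>k<n. (1 + r k) / (1 - r k))
          \<longleftrightarrow> char_poly (U * Z) = (\<Prod>k<n. [:- complex_of_real (r k), 1:]))
       \<and> (det Z \<noteq> 0 \<and> U \<noteq> 1\<^sub>m n \<longrightarrow>
         Re (det (1\<^sub>m n - Z * Z)) / (cmod (det (1\<^sub>m n - U * Z)))\<^sup>2
           < (\<Prod>k<n. (1 + r k) / (1 - r k))))"
  using psd_unitary_det_ratio_lower[OF assms] psd_unitary_det_ratio_upper[OF assms] by blast

end
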